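(* Let $W(x,y)=1$ if $y+\frac12\le x$ or $x+\frac12\le y$, and $W(x,y)=0$ otherwise. This is the limit graphon of the half graphs. Then every minimizer $\theta$ of $J$ on $H$ takes values in $\{0,1\}$ for a.e. $x\in[0,1]$.
   Context: For a graphon $W:[0,1]^2\to[0,1]$ (measurable, symmetric), the limiting bisection cut functional is $J(\theta)=8\int_{[0,1]^2}W(x,y)\theta(x)(1-\theta(y))\,dx\,dy$ for measurable $\theta:[0,1]\to[0,1]$. The constraint set is $H=\{\theta:[0,1]\to[0,1]\text{ measurable}:\int_0^1\theta=1/2\}$. *)

theory Defs
  imports "HOL-Analysis.Analysis"
begin

definition halfW :: "real \<Rightarrow> real \<Rightarrow> real" where
  "halfW x y = (if y + 1/2 \<le> x \<or> x + 1/2 \<le> y then 1 else 0)"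

definition cutJ :: "(real \<Rightarrow> real \<Rightarrow> real) \<Rightarrow> (real \<Rightarrow> real) \<Rightarrow> real" where
  "cutJ W \<theta> = 8 * (LINT z : {0..1} \<times> {0..1} | (lebesgue \<Otimes>\<^sub>M lebesgue).
                        W (fst z) (snd z) * \<theta> (fst z) * (1 - \<theta> (snd z)))"

definition bisectH :: "(real \<Rightarrow> real) set" where
  "bisectH = {\<theta>. \<theta> \<in> borel_measurable lebesgue \<and>
                 (\<forall>x\<in>{0..1}. 0 \<le> \<theta> x \<and> \<theta> x \<le> 1) \<and>
                 (LINT x : {0..1} | lebesgue. \<theta> x) = 1/2}"

end

theory Submission
  imports Defs
begin

text \<open>
  Write \<open>G(x) = \<integral>\<^sub>0\<^sup>1 W(x,y) (1 - 2 \<theta>(y)) dy\<close>. Expanding the cut functional,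
  \<open>J(\<theta> + s \<phi>) = J(\<theta>) + 8 s \<integral> \<phi> G - 8 s\<^sup>2 \<integral>\<integral> W \<phi> \<phi>\<close>, so a minimizer satisfies, for every
  admissible direction \<open>\<phi>\<close> with \<open>\<integral> \<phi> = 0\<close>, both \<open>\<integral> \<phi> G = 0\<close> and \<open>\<integral>\<integral> W \<phi> \<phi> \<le> 0\<close>.

  Let \<open>E\<close> be a subset of \<open>(0, 1/2)\<close> on which \<open>\<theta>\<close> is bounded away from \<open>0\<close> and \<open>1\<close>. Since \<open>W\<close>
  vanishes on \<open>E \<times> E\<close>, the directions \<open>|B| 1\<^sub>A - |A| 1\<^sub>B\<close> with \<open>A, B \<subseteq> E\<close> are admissible and
  force \<open>G\<close> to be a.e. constant on \<open>E\<close>. For the half graphon \<open>G(x) - G(y)\<close> is the integral of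
  \<open>1 - 2 \<theta>\<close> over \<open>[x + 1/2, y + 1/2)\<close>, and a Lebesgue density argument turns the constancy of \<open>G\<close>
  into \<open>\<theta> = 1/2\<close> a.e. on \<open>E + 1/2\<close>. So \<open>\<theta>\<close> is fractional on a set \<open>R\<close> of positive measure and
  on \<open>R + 1/2\<close>; splitting \<open>R\<close> at its quartiles gives a direction \<open>\<phi>\<close> supported on \<open>R \<union> (R + 1/2)\<close>
  with \<open>\<integral>\<integral> W \<phi> \<phi> > 0\<close>, contradicting second-order optimality. The interval \<open>(1/2, 1)\<close> is
  symmetric.
\<close>

section \<open>Bounded set integrals and Lebesgue density\<close>

lemma set_integrable_bounded:
  fixes f :: "'a \<Rightarrow> real"
  assumes "f \<in> borel_measurable M" "S \<in> sets M" "emeasure M S < \<infinity>"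
    and "\<And>x. x \<in> S \<Longrightarrow> \<bar>f x\<bar> \<le> C"
  shows "set_integrable M S f"
  unfolding set_integrable_def
proof (rule Bochner_Integration.integrable_bound)
  show "integrable M (\<lambda>x. C * indicator S x)"
    using integrable_real_indicator[OF assms(2,3)] by simp
  show "(\<lambda>x. indicator S x *\<^sub>R f x) \<in> borel_measurable M"
    using assms(1,2) by measurable
  show "AE x in M. norm (indicator S x *\<^sub>R f x) \<le> norm (C * indicator S x)"
    using assms(4) by (auto intro!: AE_I2 split: split_indicator) (meson abs_ge_self order_trans)
qed

lemma set_integral_ge_const:
  fixes f :: "'a \<Rightarrow> real"
  assumes "set_integrable M S f" "S \<in> sets M" "emeasure M S < \<infinity>" "\<And>x. x \<in> S \<Longrightarrow> c \<le> f x"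
  shows "c * measure M S \<le> (LINT x:S|M. f x)"
proof -
  have "(LINT x:S|M. c) \<le> (LINT x:S|M. f x)"
    by (rule set_integral_mono) (use assms in \<open>auto intro: set_integrable_bounded[where C="\<bar>c\<bar>"]\<close>)
  then show ?thesis using set_integral_const[of S M c] assms(2,3) by (simp add: mult.commute)
qed

lemma set_integral_le_const:
  fixes f :: "'a \<Rightarrow> real"
  assumes "set_integrable M S f" "S \<in> sets M" "emeasure M S < \<infinity>" "\<And>x. x \<in> S \<Longrightarrow> f x \<le> c"
  shows "(LINT x:S|M. f x) \<le> c * measure M S"
proof -
  have "(LINT x:S|M. f x) \<le> (LINT x:S|M. c)"
    by (rule set_integral_mono) (use assms in \<open>auto intro: set_integrable_bounded[where C="\<bar>c\<bar>"]\<close>)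
  then show ?thesis using set_integral_const[of S M c] assms(2,3) by (simp add: mult.commute)
qed

lemma lmeasurable_subset_interval:
  "S \<in> sets lebesgue \<Longrightarrow> S \<subseteq> {a..b::real} \<Longrightarrow> S \<in> lmeasurable"
  by (meson bounded_closed_interval bounded_subset bounded_set_imp_lmeasurable)

lemma null_sets_lebesgue_iff_measure_zero:
  fixes S :: "'a::euclidean_space set"
  assumes "S \<in> lmeasurable"
  shows "S \<in> null_sets lebesgue \<longleftrightarrow> measure lebesgue S = 0"
  using assms by (simp add: negligible_iff_measure flip: negligible_iff_null_sets)

lemma borel_measurable_lebesgue_shift:
  fixes f :: "real \<Rightarrow> real"
  assumes "f \<in> borel_measurable lebesgue"
  shows "(\<lambda>u. f (u + c)) \<in> borel_measurable lebesgue"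
proof -
  have "(\<lambda>u::real. u + c) \<in> lebesgue \<rightarrow>\<^sub>M lebesgue"
  proof (rule measurableI)
    fix A :: "real set" assume "A \<in> sets lebesgue"
    moreover have "(\<lambda>u. u + c) -` A \<inter> space lebesgue = (\<lambda>x. - c + x) ` A"
      by (auto simp: image_iff algebra_simps)
    ultimately show "(\<lambda>u. u + c) -` A \<inter> space lebesgue \<in> sets lebesgue"
      using lebesgue_sets_translation[of A "- c"] by simp
  qed simp
  then show ?thesis using assms by (rule measurable_compose)
qed

lemma compact_grid_cover:
  fixes K T :: "real set"
  assumes K: "compact K" and T: "open T" "K \<subseteq> T"
  obtains h :: real and \<K> :: "int set"
  where "0 < h" "finite \<K>" "K \<subseteq> (\<Union>k\<in>\<K>. {x. \<lfloor>x / h\<rfloor> = k})" "\<And>k. k \<in> \<K> \<Longrightarrow> {x. \<lfloor>x / h\<rfloor> = k} \<subseteq> T"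
proof -
  obtain \<delta> where \<delta>: "\<delta> > 0" "(\<Union>x\<in>K. ball x \<delta>) \<subseteq> T"
    using compact_subset_open_imp_ball_epsilon_subset[OF K T] by blast
  define h where "h = \<delta> / 2"
  have h: "h > 0" using \<delta> by (simp add: h_def)
  define \<K> where "\<K> = (\<lambda>x. \<lfloor>x / h\<rfloor>) ` K"
  have "finite \<K>"
  proof -
    obtain a where "K \<subseteq> {-a..a}"
      using bounded_subset_cbox_symmetric[OF compact_imp_bounded[OF K]] by (auto simp: cbox_interval)
    then have "-a / h \<le> x / h \<and> x / h \<le> a / h" if "x \<in> K" for x
      using h that divide_right_mono[of "-a" x h] divide_right_mono[of x a h] by auto
    then have "\<K> \<subseteq> {\<lfloor>-a / h\<rfloor>..\<lfloor>a / h\<rfloor>}"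
      by (auto simp: \<K>_def intro!: floor_mono)
    then show ?thesis by (rule finite_subset) simp
  qed
  moreover have "{x. \<lfloor>x / h\<rfloor> = k} \<subseteq> T" if k: "k \<in> \<K>" for k
  proof
    fix y assume y: "y \<in> {x. \<lfloor>x / h\<rfloor> = k}"
    obtain x where x: "x \<in> K" "k = \<lfloor>x / h\<rfloor>"
      using k by (auto simp: \<K>_def)
    have cell: "real_of_int k * h \<le> z \<and> z < (real_of_int k + 1) * h" if "\<lfloor>z / h\<rfloor> = k" for z
      using h that by (auto simp: floor_eq_iff field_simps)
    have "dist x y < h"
      using cell[of x] cell[of y] x(2) y by (auto simp: dist_real_def abs_less_iff algebra_simps)
    then have "y \<in> ball x \<delta>"
      using \<delta>(1) by (simp add: h_def)
    then show "y \<in> T" using \<delta>(2) x(1) by blast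
  qed
  moreover have "K \<subseteq> (\<Union>k\<in>\<K>. {x. \<lfloor>x / h\<rfloor> = k})"
    by (auto simp: \<K>_def)
  ultimately show thesis
    using that[OF h] by blast
qed

lemma measure_compact_le_sparse_cover:
  fixes P K T :: "real set"
  assumes P: "P \<in> lmeasurable" and K: "compact K" "K \<subseteq> P"
    and T: "open T" "K \<subseteq> T" "T \<in> lmeasurable"
    and sparse: "\<And>p q. p < q \<Longrightarrow> measure lebesgue (P \<inter> {p..q}) \<le> c * (q - p)" and c: "0 \<le> c"
  shows "measure lebesgue K \<le> c * measure lebesgue T"
proof -
  obtain h \<K> where h: "0 < h" and \<K>: "finite \<K>" and cover: "K \<subseteq> (\<Union>k\<in>\<K>. {x. \<lfloor>x / h\<rfloor> = k})"
    and I_T: "\<And>k. k \<in> \<K> \<Longrightarrow> {x. \<lfloor>x / h\<rfloor> = k} \<subseteq> T"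
    using compact_grid_cover[OF K(1) T(1,2)] by metis
  define I where "I k = {x. \<lfloor>x / h\<rfloor> = k}" for k
  have I_eq: "I k = {real_of_int k * h ..< (real_of_int k + 1) * h}" for k
    using h by (auto simp: I_def floor_eq_iff field_simps)
  have I_measure: "measure lebesgue (I k) = h" for k
    using h by (simp add: I_eq algebra_simps)
  have I_lm: "I k \<in> lmeasurable" for k
    by (rule lmeasurable_subset_interval[of _ "real_of_int k * h" "(real_of_int k + 1) * h"])
      (auto simp: I_eq)
  have disj: "disjoint_family_on I \<K>" "disjoint_family_on (\<lambda>k. P \<inter> I k) \<K>"
    by (auto simp: disjoint_family_on_def I_def)
  have P_I: "P \<inter> I k \<in> lmeasurable" for k
    using P I_lm by auto
  have P_I_sparse: "measure lebesgue (P \<inter> I k) \<le> c * h" for k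
  proof -
    have "measure lebesgue (P \<inter> I k) \<le> measure lebesgue (P \<inter> {real_of_int k * h .. (real_of_int k + 1) * h})"
      using P by (intro measure_mono_fmeasurable) (auto simp: I_eq)
    also have "\<dots> \<le> c * ((real_of_int k + 1) * h - real_of_int k * h)"
      using h by (intro sparse) (simp add: algebra_simps)
    finally show ?thesis by (simp add: algebra_simps)
  qed
  have "(\<Union>k\<in>\<K>. P \<inter> I k) \<in> lmeasurable"
    using \<K> P_I by (intro fmeasurable.finite_UN) auto
  then have "measure lebesgue K \<le> measure lebesgue (\<Union>k\<in>\<K>. P \<inter> I k)"
    using cover K by (intro measure_mono_fmeasurable) (auto simp: I_def compact_imp_closed borel_closed)
  also have "\<dots> = (\<Sum>k\<in>\<K>. measure lebesgue (P \<inter> I k))"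
    using \<K> disj(2) fmeasurableD[OF P_I] fmeasurableD2[OF P_I]
    by (intro measure_finite_Union) auto
  also have "\<dots> \<le> (\<Sum>k\<in>\<K>. c * h)"
    by (intro sum_mono P_I_sparse)
  also have "\<dots> = c * measure lebesgue (\<Union>k\<in>\<K>. I k)"
    using \<K> disj(1) fmeasurableD[OF I_lm] fmeasurableD2[OF I_lm]
    by (subst measure_finite_Union) (auto simp: I_measure)
  also have "\<dots> \<le> c * measure lebesgue T"
    using I_T I_lm T(3) c by (intro mult_left_mono measure_mono_fmeasurable) (auto simp: I_def)
  finally show ?thesis .
qed

lemma exists_dense_interval:
  fixes P :: "real set"
  assumes P: "P \<in> sets lebesgue" "bounded P" "0 < measure lebesgue P" and c: "0 \<le> c" "c < 1"
  shows "\<exists>p q. p < q \<and> c * (q - p) < measure lebesgue (P \<inter> {p..q})"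
proof (rule ccontr)
  assume "\<not> ?thesis"
  then have sparse: "measure lebesgue (P \<inter> {p..q}) \<le> c * (q - p)" if "p < q" for p q
    using that by force
  define \<mu> where "\<mu> = measure lebesgue P"
  define e where "e = (1 - c) * \<mu> / 4"
  have e: "e > 0" using P c by (simp add: e_def \<mu>_def)
  have P_lm: "P \<in> lmeasurable" using P by (simp add: bounded_set_imp_lmeasurable)
  obtain T where T: "open T" "P \<subseteq> T" "T - P \<in> lmeasurable" "emeasure lebesgue (T - P) < e"
    using sets_lebesgue_outer_open[OF P(1) e] by blast
  obtain K where K: "closed K" "K \<subseteq> P" "P - K \<in> lmeasurable" "emeasure lebesgue (P - K) < e"
    using sets_lebesgue_inner_closed[OF P(1) e] by blast
  have "compact K" using K P(2) by (meson bounded_subset compact_eq_bounded_closed)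
  have T_lm: "T \<in> lmeasurable"
    using fmeasurable.Un[OF P_lm T(3)] T(2) by (simp add: Un_absorb1 Un_Diff_cancel)
  have "measure lebesgue T \<le> \<mu> + e"
  proof -
    have "measure lebesgue T \<le> \<mu> + measure lebesgue (T - P)"
      using measure_Un_le[of P lebesgue "T - P"] P(1) T(2,3) by (simp add: \<mu>_def Un_absorb1 fmeasurableD)
    then show ?thesis using T(3,4) by (simp add: emeasure_eq_measure2 e less_le_not_le)
  qed
  moreover have "\<mu> - e < measure lebesgue K"
  proof -
    have "\<mu> \<le> measure lebesgue K + measure lebesgue (P - K)"
      using measure_Un_le[of K lebesgue "P - K"] K(1,2,3) unfolding \<mu>_def
      by (simp add: Un_absorb1 fmeasurableD borel_closed Diff_partition)
    then show ?thesis using K(3,4) by (simp add: emeasure_eq_measure2 e less_le_not_le)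
  qed
  moreover have "measure lebesgue K \<le> c * measure lebesgue T"
    by (rule measure_compact_le_sparse_cover[OF P_lm \<open>compact K\<close> K(2) T(1) _ T_lm sparse c(1)])
      (use K(2) T(2) in auto)
  ultimately have "\<mu> - e < c * (\<mu> + e)"
    using c(1) by (smt (verit) mult_left_mono)
  then have "(1 - c) * \<mu> < (1 + c) * e"
    by (simp add: algebra_simps)
  also have "\<dots> \<le> 2 * e"
    using c e by simp
  finally show False
    using e unfolding e_def by (simp add: mult.commute)
qed

lemma measure_Int_interval_ge:
  fixes P :: "real set"
  assumes P: "P \<in> sets lebesgue" and pq: "p \<le> a" "a \<le> b" "b \<le> q"
  shows "b - a - measure lebesgue ({p..q} - P) \<le> measure lebesgue (P \<inter> {a<..<b})"
proof -
  have "{p..q} - P \<in> lmeasurable"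
    using P by (intro lmeasurable_subset_interval[of _ p q]) auto
  moreover have "P \<inter> {a<..<b} \<in> lmeasurable"
    using P by (intro lmeasurable_subset_interval[of _ a b]) auto
  ultimately have lm: "{p..q} - P \<in> lmeasurable" "P \<inter> {a<..<b} \<in> lmeasurable" .
  have "{a<..<b} \<subseteq> (P \<inter> {a<..<b}) \<union> ({p..q} - P)"
    using pq by auto
  then have "measure lebesgue {a<..<b} \<le> measure lebesgue ((P \<inter> {a<..<b}) \<union> ({p..q} - P))"
    using lm by (intro measure_mono_fmeasurable) auto
  also have "\<dots> \<le> measure lebesgue (P \<inter> {a<..<b}) + measure lebesgue ({p..q} - P)"
    using lm by (intro measure_Un_le) (auto intro: fmeasurableD)
  finally show ?thesis
    using pq(2) by simp
qed

section \<open>Functions with constant averages\<close>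

lemma set_integral_ge_level_part:
  fixes F :: "real \<Rightarrow> real"
  assumes F: "F \<in> borel_measurable lebesgue" and J: "J \<in> lmeasurable"
    and bound: "\<And>z. z \<in> J \<Longrightarrow> \<bar>F z\<bar> \<le> 1"
    and D: "D \<in> sets lebesgue" and level: "\<And>z. z \<in> J \<inter> D \<Longrightarrow> \<delta> \<le> F z"
  shows "(1 + \<delta>) * measure lebesgue (J \<inter> D) - measure lebesgue J \<le> (LINT z:J|lebesgue. F z)"
proof -
  have JD: "J \<inter> D \<in> lmeasurable" "J - D \<in> lmeasurable"
    using J D by (auto intro: fmeasurableI2[OF J] fmeasurableD)
  have int: "set_integrable lebesgue S F" if "S \<in> lmeasurable" "S \<subseteq> J" for S
    using that F bound by (intro set_integrable_bounded[where C=1]) (auto simp: fmeasurable_def)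
  have "measure lebesgue J = measure lebesgue (J \<inter> D) + measure lebesgue (J - D)"
    using measure_Un3[OF JD] by (simp add: Int_Diff_Un Int_Diff_disjoint)
  moreover have "(LINT z:J|lebesgue. F z) = (LINT z:J \<inter> D|lebesgue. F z) + (LINT z:J - D|lebesgue. F z)"
    using set_integral_Un[of "J \<inter> D" "J - D" lebesgue F] JD int by (auto simp: Int_Diff_Un)
  moreover have "\<delta> * measure lebesgue (J \<inter> D) \<le> (LINT z:J \<inter> D|lebesgue. F z)"
    using JD int level by (intro set_integral_ge_const) (auto simp: fmeasurable_def)
  moreover have "- 1 * measure lebesgue (J - D) \<le> (LINT z:J - D|lebesgue. F z)"
    using JD int bound by (intro set_integral_ge_const) (auto simp: fmeasurable_def abs_le_iff)
  ultimately show ?thesis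
    by (simp add: algebra_simps)
qed

text \<open>Equivalently, \<open>G\<close> is almost everywhere constant on \<open>E\<close>.\<close>
definition constant_averages_on :: "real set \<Rightarrow> (real \<Rightarrow> real) \<Rightarrow> bool" where
  "constant_averages_on E G \<longleftrightarrow> (\<forall>A B. A \<subseteq> E \<longrightarrow> B \<subseteq> E \<longrightarrow> A \<in> sets lebesgue \<longrightarrow> B \<in> sets lebesgue \<longrightarrow>
     measure lebesgue B * (LINT x:A|lebesgue. G x) = measure lebesgue A * (LINT x:B|lebesgue. G x))"

lemma constant_averages_on_scale:
  "constant_averages_on E G \<Longrightarrow> constant_averages_on E (\<lambda>x. c * G x)"
  unfolding constant_averages_on_def by (simp add: algebra_simps)

lemma constant_averages_on_no_gap:
  assumes avg: "constant_averages_on E G"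
    and G: "G \<in> borel_measurable lebesgue" "\<And>x. x \<in> E \<Longrightarrow> \<bar>G x\<bar> \<le> C"
    and A: "A \<subseteq> E" "A \<in> lmeasurable" "0 < measure lebesgue A"
    and B: "B \<subseteq> E" "B \<in> lmeasurable" "0 < measure lebesgue B"
    and gap: "\<And>x y. x \<in> A \<Longrightarrow> y \<in> B \<Longrightarrow> G y + \<gamma> \<le> G x"
  shows "\<gamma> \<le> 0"
proof -
  obtain x0 where x0: "x0 \<in> A" using A(3) by force
  have "B \<noteq> {}" using B(3) by force
  define s where "s = Sup (G ` B)"
  have "bdd_above (G ` B)"
    using gap[OF x0] by (intro bdd_aboveI[of _ "G x0 - \<gamma>"]) force
  then have upper: "G y \<le> s" if "y \<in> B" for y
    unfolding s_def using that by (simp add: cSup_upper)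
  have lower: "s + \<gamma> \<le> G x" if "x \<in> A" for x
  proof -
    have "s \<le> G x - \<gamma>"
      unfolding s_def using \<open>B \<noteq> {}\<close> gap[OF that] by (intro cSup_least) force+
    then show ?thesis by simp
  qed
  have int: "set_integrable lebesgue S G" if "S \<subseteq> E" "S \<in> lmeasurable" for S
    using that G by (intro set_integrable_bounded[where C=C]) (auto simp: fmeasurable_def)
  have "measure lebesgue B * ((s + \<gamma>) * measure lebesgue A) \<le> measure lebesgue B * (LINT x:A|lebesgue. G x)"
    using A B int lower by (intro mult_left_mono set_integral_ge_const) (auto simp: fmeasurable_def)
  also have "\<dots> = measure lebesgue A * (LINT x:B|lebesgue. G x)"
    using avg A B unfolding constant_averages_on_def by (auto intro: fmeasurableD)
  also have "\<dots> \<le> measure lebesgue A * (s * measure lebesgue B)"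
    using A B int upper by (intro mult_left_mono set_integral_le_const) (auto simp: fmeasurable_def)
  finally have "measure lebesgue A * measure lebesgue B * \<gamma> \<le> 0"
    by (simp add: algebra_simps)
  then show ?thesis
    using A(3) B(3) by (simp add: mult_le_0_iff zero_less_mult_iff)
qed

lemma set_integral_lower_bound_translate:
  fixes F :: "real \<Rightarrow> real" and P J :: "real set"
  assumes F: "F \<in> borel_measurable lebesgue" and P: "P \<in> sets lebesgue" "\<And>u. u \<in> P \<Longrightarrow> \<delta> < F (u + \<tau>)"
    and J: "{x + \<tau><..<y + \<tau>} \<subseteq> J" "J \<subseteq> {x + \<tau>..y + \<tau>}" "J \<in> sets lebesgue"
    and bound: "\<And>z. z \<in> J \<Longrightarrow> \<bar>F z\<bar> \<le> 1" and "0 \<le> \<delta>" "x \<le> y"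
  shows "(1 + \<delta>) * measure lebesgue (P \<inter> {x<..<y}) - (y - x) \<le> (LINT z:J|lebesgue. F z)"
proof -
  define D where "D = {z. \<delta> < F z}"
  have "{z \<in> space lebesgue. \<delta> < F z} \<in> sets lebesgue"
    using F by measurable
  then have D: "D \<in> sets lebesgue"
    by (simp add: D_def)
  have J_lm: "J \<in> lmeasurable" "J \<inter> D \<in> lmeasurable"
    using J D by (auto intro!: lmeasurable_subset_interval[of _ "x + \<tau>" "y + \<tau>"])
  have P_lm: "P \<inter> {x<..<y} \<in> lmeasurable"
    using P(1) by (intro lmeasurable_subset_interval[of _ x y]) auto
  have "(+) \<tau> ` (P \<inter> {x<..<y}) \<subseteq> J \<inter> D"
    using J(1) P(2) by (auto simp: D_def add.commute)
  then have "measure lebesgue ((+) \<tau> ` (P \<inter> {x<..<y})) \<le> measure lebesgue (J \<inter> D)"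
    using measurable_translation[OF P_lm] J_lm by (intro measure_mono_fmeasurable) auto
  then have "(1 + \<delta>) * measure lebesgue (P \<inter> {x<..<y}) \<le> (1 + \<delta>) * measure lebesgue (J \<inter> D)"
    using \<open>0 \<le> \<delta>\<close> by (intro mult_left_mono) (auto simp: measure_translation)
  moreover have "measure lebesgue J \<le> y - x"
    using J J_lm measure_mono_fmeasurable[of J "{x + \<tau>..y + \<tau>}" lebesgue] \<open>x \<le> y\<close> by auto
  moreover have "(1 + \<delta>) * measure lebesgue (J \<inter> D) - measure lebesgue J \<le> (LINT z:J|lebesgue. F z)"
    using set_integral_ge_level_part[OF F J_lm(1) bound D] by (simp add: D_def)
  ultimately show ?thesis
    by linarith
qed

lemma increment_level_set_null:
  fixes E P :: "real set" and G F :: "real \<Rightarrow> real" and I :: "real \<Rightarrow> real \<Rightarrow> real set"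
  assumes E: "bounded E" and avg: "constant_averages_on E G"
    and G: "G \<in> borel_measurable lebesgue" "\<And>x. x \<in> E \<Longrightarrow> \<bar>G x\<bar> \<le> C"
    and F: "F \<in> borel_measurable lebesgue"
    and I: "\<And>x y. x \<in> E \<Longrightarrow> y \<in> E \<Longrightarrow> x \<le> y \<Longrightarrow>
        {x + \<tau><..<y + \<tau>} \<subseteq> I x y \<and> I x y \<subseteq> {x + \<tau>..y + \<tau>} \<and> I x y \<in> sets lebesgue"
    and F_bound: "\<And>x y z. x \<in> E \<Longrightarrow> y \<in> E \<Longrightarrow> x \<le> y \<Longrightarrow> z \<in> I x y \<Longrightarrow> \<bar>F z\<bar> \<le> 1"
    and increment: "\<And>x y. x \<in> E \<Longrightarrow> y \<in> E \<Longrightarrow> x \<le> y \<Longrightarrow> G x - G y = (LINT z:I x y|lebesgue. F z)"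
    and P: "P \<in> sets lebesgue" "P \<subseteq> E" "\<And>u. u \<in> P \<Longrightarrow> \<delta> < F (u + \<tau>)"
    and \<delta>: "0 < \<delta>" "\<delta> \<le> 1"
  shows "P \<in> null_sets lebesgue"
proof -
  have P_lm: "P \<in> lmeasurable"
    using P E by (meson bounded_subset bounded_set_imp_lmeasurable)
  have P_part: "P \<inter> S \<in> lmeasurable" if "S \<in> sets lebesgue" for S
    using P(1) that by (intro fmeasurableI2[OF P_lm]) auto
  have "measure lebesgue P = 0"
  proof (rule ccontr)
    assume "measure lebesgue P \<noteq> 0"
    then have "0 < measure lebesgue P" by (simp add: less_le)
    \<comment> \<open>on an interval \<open>[p, q]\<close> where \<open>P\<close> has density at least \<open>1 - \<delta>/8\<close>, the increment
      of \<open>G\<close> between its first and last quarter is at least \<open>\<delta> (q - p) / 4\<close>\<close>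
    define \<eta> where "\<eta> = \<delta> / 8"
    obtain p q where pq: "p < q" "(1 - \<eta>) * (q - p) < measure lebesgue (P \<inter> {p..q})"
      using exists_dense_interval[OF P(1) bounded_subset[OF E P(2)] \<open>0 < measure lebesgue P\<close>, of "1 - \<eta>"] \<delta>
      by (auto simp: \<eta>_def)
    define L where "L = q - p"
    have L: "0 < L" "q = p + L" using pq by (simp_all add: L_def)
    have "{p..q} - P = {p..q} - P \<inter> {p..q}"
      by blast
    then have "measure lebesgue ({p..q} - P) = L - measure lebesgue (P \<inter> {p..q})"
      using pq(1) fmeasurableD[OF P_part[of "{p..q}"]] measure_Diff[of lebesgue "{p..q}" "P \<inter> {p..q}"]
      by (simp add: L_def)
    then have fill: "b - a - \<eta> * L \<le> measure lebesgue (P \<inter> {a<..<b})" if "p \<le> a" "a \<le> b" "b \<le> q" for a b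
      using measure_Int_interval_ge[OF P(1) that] pq(2) by (simp add: L_def algebra_simps)
    have quarter_pos: "0 < measure lebesgue (P \<inter> {a..a + L/4})" if "p \<le> a" "a + L/4 \<le> q" for a
    proof -
      have "0 < L/4 - \<eta> * L"
        using L \<delta> by (simp add: \<eta>_def)
      also have "\<dots> \<le> measure lebesgue (P \<inter> {a<..<a + L/4})"
        using fill[of a "a + L/4"] that L by simp
      also have "\<dots> \<le> measure lebesgue (P \<inter> {a..a + L/4})"
        using P_part by (intro measure_mono_fmeasurable) (auto intro: fmeasurableD)
      finally show ?thesis .
    qed
    define A where "A = P \<inter> {p..p + L/4}"
    define B where "B = P \<inter> {q - L/4..q}"
    have AB: "A \<subseteq> E" "B \<subseteq> E" "A \<in> lmeasurable" "B \<in> lmeasurable"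
      using P(2) P_part by (auto simp: A_def B_def)
    have A_pos: "0 < measure lebesgue A" and B_pos: "0 < measure lebesgue B"
      using quarter_pos[of p] quarter_pos[of "q - L/4"] L by (simp_all add: A_def B_def add.commute)
    have gap: "G y + \<delta> * L / 4 \<le> G x" if x: "x \<in> A" and y: "y \<in> B" for x y
    proof -
      have xy: "p \<le> x" "x \<le> p + L/4" "q - L/4 \<le> y" "y \<le> q" "x \<in> E" "y \<in> E"
        using x y AB by (auto simp: A_def B_def)
      then have "x \<le> y" "L/2 \<le> y - x" using L by linarith+
      have J: "{x + \<tau><..<y + \<tau>} \<subseteq> I x y" "I x y \<subseteq> {x + \<tau>..y + \<tau>}" "I x y \<in> sets lebesgue"
        using I[OF xy(5,6) \<open>x \<le> y\<close>] by auto
      have "(1 + \<delta>) * measure lebesgue (P \<inter> {x<..<y}) - (y - x) \<le> (LINT z:I x y|lebesgue. F z)"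
        using \<delta> \<open>x \<le> y\<close>
        by (intro set_integral_lower_bound_translate[OF F P(1,3) J F_bound[OF xy(5,6) \<open>x \<le> y\<close>]]) auto
      then have "(1 + \<delta>) * measure lebesgue (P \<inter> {x<..<y}) - (y - x) \<le> G x - G y"
        using increment[OF xy(5,6) \<open>x \<le> y\<close>] by simp
      moreover have "y - x - \<eta> * L \<le> measure lebesgue (P \<inter> {x<..<y})"
        using fill[of x y] xy \<open>x \<le> y\<close> by linarith
      then have "(1 + \<delta>) * (y - x - \<eta> * L) \<le> (1 + \<delta>) * measure lebesgue (P \<inter> {x<..<y})"
        using \<delta> by (intro mult_left_mono) auto
      ultimately have "(1 + \<delta>) * (y - x - \<eta> * L) - (y - x) \<le> G x - G y"
        by linarith
      moreover have "\<delta> * (L/2) \<le> \<delta> * (y - x)" "(1 + \<delta>) * (\<eta> * L) \<le> 2 * (\<eta> * L)"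
        using \<open>L/2 \<le> y - x\<close> \<delta> L by (auto simp: \<eta>_def intro: mult_left_mono)
      moreover have "(1 + \<delta>) * (y - x - \<eta> * L) - (y - x) = \<delta> * (y - x) - (1 + \<delta>) * (\<eta> * L)"
        "\<delta> * (L/2) - 2 * (\<eta> * L) = \<delta> * L / 4"
        by (simp_all add: \<eta>_def algebra_simps)
      ultimately show ?thesis
        by linarith
    qed
    have "\<delta> * L / 4 \<le> 0"
      using constant_averages_on_no_gap[OF avg G AB(1,3) A_pos AB(2,4) B_pos gap] .
    then show False
      using \<delta> L by (simp add: mult_le_0_iff)
  qed
  then show ?thesis
    using null_sets_lebesgue_iff_measure_zero[OF P_lm] by simp
qed

lemma increment_ae_zero:
  fixes E :: "real set" and G F :: "real \<Rightarrow> real" and I :: "real \<Rightarrow> real \<Rightarrow> real set"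
  assumes E: "E \<in> sets lebesgue" "bounded E" and avg: "constant_averages_on E G"
    and G: "G \<in> borel_measurable lebesgue" "\<And>x. x \<in> E \<Longrightarrow> \<bar>G x\<bar> \<le> C"
    and F: "F \<in> borel_measurable lebesgue"
    and I: "\<And>x y. x \<in> E \<Longrightarrow> y \<in> E \<Longrightarrow> x \<le> y \<Longrightarrow>
        {x + \<tau><..<y + \<tau>} \<subseteq> I x y \<and> I x y \<subseteq> {x + \<tau>..y + \<tau>} \<and> I x y \<in> sets lebesgue"
    and F_bound: "\<And>x y z. x \<in> E \<Longrightarrow> y \<in> E \<Longrightarrow> x \<le> y \<Longrightarrow> z \<in> I x y \<Longrightarrow> \<bar>F z\<bar> \<le> 1"
    and increment: "\<And>x y. x \<in> E \<Longrightarrow> y \<in> E \<Longrightarrow> x \<le> y \<Longrightarrow> G x - G y = (LINT z:I x y|lebesgue. F z)"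
  shows "AE u in lebesgue. u \<in> E \<longrightarrow> F (u + \<tau>) = 0"
proof -
  have F_shift: "(\<lambda>u. F (u + \<tau>)) \<in> borel_measurable lebesgue"
    using borel_measurable_lebesgue_shift[OF F] .
  \<comment> \<open>\<open>\<sigma> = \<plusminus>1\<close> covers the level sets of both \<open>F\<close> and \<open>- F\<close>\<close>
  have level_null: "{u \<in> E. 1 / Suc n < \<sigma> * F (u + \<tau>)} \<in> null_sets lebesgue"
    if \<sigma>: "\<bar>\<sigma>\<bar> = 1" for \<sigma> :: real and n :: nat
  proof (rule increment_level_set_null[OF E(2) constant_averages_on_scale[OF avg, of \<sigma>]])
    have "{u \<in> space lebesgue. 1 / Suc n < \<sigma> * F (u + \<tau>)} \<in> sets lebesgue"
      using F_shift by measurable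
    then show "{u \<in> E. 1 / Suc n < \<sigma> * F (u + \<tau>)} \<in> sets lebesgue"
      using E(1) by (simp add: Collect_conj_eq Int_commute sets.Int)
    show "(\<lambda>x. \<sigma> * G x) \<in> borel_measurable lebesgue" "(\<lambda>z. \<sigma> * F z) \<in> borel_measurable lebesgue"
      using G(1) F by measurable
    show "\<bar>\<sigma> * G x\<bar> \<le> C" if "x \<in> E" for x
      using G(2)[OF that] \<sigma> by (simp add: abs_mult)
    show "\<bar>\<sigma> * F z\<bar> \<le> 1" if "x \<in> E" "y \<in> E" "x \<le> y" "z \<in> I x y" for x y z
      using F_bound[OF that] \<sigma> by (simp add: abs_mult)
    show "\<sigma> * G x - \<sigma> * G y = (LINT z:I x y|lebesgue. \<sigma> * F z)" if "x \<in> E" "y \<in> E" "x \<le> y" for x y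
      using increment[OF that] by (simp add: right_diff_distrib[symmetric])
  qed (use I in auto)
  define N where "N = (\<Union>n. {u \<in> E. 1 / Suc n < 1 * F (u + \<tau>)}) \<union> (\<Union>n. {u \<in> E. 1 / Suc n < -1 * F (u + \<tau>)})"
  have "N \<in> null_sets lebesgue"
    unfolding N_def by (intro null_sets.Un null_sets_UN level_null) auto
  moreover have "{u \<in> space lebesgue. \<not> (u \<in> E \<longrightarrow> F (u + \<tau>) = 0)} \<subseteq> N"
  proof
    fix u assume "u \<in> {u \<in> space lebesgue. \<not> (u \<in> E \<longrightarrow> F (u + \<tau>) = 0)}"
    then have u: "u \<in> E" "0 < \<bar>F (u + \<tau>)\<bar>" by auto
    then obtain n where "1 / Suc n < \<bar>F (u + \<tau>)\<bar>"
      by (metis nat_approx_posE)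
    then show "u \<in> N"
      using u(1) unfolding N_def by (cases "0 \<le> F (u + \<tau>)") auto
  qed
  ultimately show ?thesis
    by (rule AE_I')
qed

section \<open>The bilinear form of the half graphon\<close>

lemma sigma_finite_lebesgue: "sigma_finite_measure (lebesgue :: real measure)"
  unfolding sigma_finite_measure_def
proof (rule exI[of _ "range (\<lambda>n::nat. {- real n..real n})"], intro conjI)
  show "\<Union> (range (\<lambda>n::nat. {- real n..real n})) = space lebesgue"
    by (auto simp: abs_le_iff) (metis abs_le_iff minus_le_iff real_arch_simple)
qed auto

interpretation lebesgue_pair: pair_sigma_finite "lebesgue :: real measure" "lebesgue :: real measure"
  unfolding pair_sigma_finite_def using sigma_finite_lebesgue by simp

abbreviation lebesgue2 :: "(real \<times> real) measure" where
  "lebesgue2 \<equiv> lebesgue \<Otimes>\<^sub>M lebesgue"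

abbreviation unit_square :: "(real \<times> real) set" where
  "unit_square \<equiv> {0..1} \<times> {0..1}"

lemma emeasure_unit_square_finite: "emeasure lebesgue2 unit_square < \<infinity>"
proof -
  have "emeasure lebesgue2 unit_square = emeasure lebesgue {0::real..1} * emeasure lebesgue {0::real..1}"
    by (rule sigma_finite_measure.emeasure_pair_measure_Times[OF sigma_finite_lebesgue]) simp_all
  then show ?thesis
    by (simp add: ennreal_mult_less_top)
qed

lemma borel_measurable_lebesgue_fst:
  "f \<in> borel_measurable lebesgue \<Longrightarrow> (\<lambda>z::real \<times> real. f (fst z)) \<in> borel_measurable lebesgue2"
  by (rule measurable_compose[OF measurable_fst])

lemma borel_measurable_lebesgue_snd:
  "f \<in> borel_measurable lebesgue \<Longrightarrow> (\<lambda>z::real \<times> real. f (snd z)) \<in> borel_measurable lebesgue2"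
  by (rule measurable_compose[OF measurable_snd])

lemma borel_measurable_lebesgue_ident [measurable]: "(\<lambda>x::real. x) \<in> borel_measurable lebesgue"
  by (rule measurable_completion) simp

lemma borel_measurable_lebesgue2_fst [measurable]: "fst \<in> borel_measurable lebesgue2"
  using borel_measurable_lebesgue_fst[OF borel_measurable_lebesgue_ident] by (simp add: comp_def)

lemma borel_measurable_lebesgue2_snd [measurable]: "snd \<in> borel_measurable lebesgue2"
  using borel_measurable_lebesgue_snd[OF borel_measurable_lebesgue_ident] by (simp add: comp_def)

lemma borel_measurable_halfW: "(\<lambda>z. halfW (fst z) (snd z)) \<in> borel_measurable lebesgue2"
  unfolding halfW_def by measurable

lemma halfW_commute: "halfW x y = halfW y x"
  by (auto simp: halfW_def)

lemma abs_halfW_le: "\<bar>halfW x y\<bar> \<le> 1"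
  by (simp add: halfW_def)

definition bounded_measurable01 :: "(real \<Rightarrow> real) set" where
  "bounded_measurable01 = {f. f \<in> borel_measurable lebesgue \<and> (\<exists>B. \<forall>x\<in>{0..1}. \<bar>f x\<bar> \<le> B)}"

lemma bounded_measurable01I:
  "f \<in> borel_measurable lebesgue \<Longrightarrow> (\<And>x. x \<in> {0..1} \<Longrightarrow> \<bar>f x\<bar> \<le> B) \<Longrightarrow> f \<in> bounded_measurable01"
  unfolding bounded_measurable01_def by blast

lemma bounded_measurable01E:
  assumes "f \<in> bounded_measurable01"
  obtains B where "f \<in> borel_measurable lebesgue" "\<And>x. x \<in> {0..1} \<Longrightarrow> \<bar>f x\<bar> \<le> B" "0 \<le> B"
proof -
  obtain B where "f \<in> borel_measurable lebesgue" "\<And>x. x \<in> {0..1} \<Longrightarrow> \<bar>f x\<bar> \<le> B"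
    using assms unfolding bounded_measurable01_def by blast
  moreover have "0 \<le> B" using calculation(2)[of 0] by simp
  ultimately show thesis by (rule that)
qed

lemma bounded_measurable01_linear:
  assumes "f \<in> bounded_measurable01" "g \<in> bounded_measurable01"
  shows "(\<lambda>x. f x + c * g x) \<in> bounded_measurable01"
proof -
  obtain B C where "f \<in> borel_measurable lebesgue" "\<And>x. x \<in> {0..1} \<Longrightarrow> \<bar>f x\<bar> \<le> B"
    "g \<in> borel_measurable lebesgue" "\<And>x. x \<in> {0..1} \<Longrightarrow> \<bar>g x\<bar> \<le> C"
    using assms by (metis bounded_measurable01E)
  then show ?thesis
    by (intro bounded_measurable01I[where B="B + \<bar>c\<bar> * C"])
      (auto simp: abs_mult intro!: abs_triangle_ineq[THEN order_trans] add_mono mult_left_mono)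
qed

lemma bisectH_bounded_measurable01: "\<theta> \<in> bisectH \<Longrightarrow> \<theta> \<in> bounded_measurable01"
  unfolding bisectH_def by (auto intro!: bounded_measurable01I[where B=1])

lemma one_minus_bounded_measurable01:
  "\<theta> \<in> bounded_measurable01 \<Longrightarrow> (\<lambda>x. 1 - c * \<theta> x) \<in> bounded_measurable01"
  using bounded_measurable01_linear[where f="\<lambda>_. 1" and g=\<theta> and c="- c"]
  by (simp add: bounded_measurable01I[where B=1])

lemma indicator_bounded_measurable01:
  "A \<in> sets lebesgue \<Longrightarrow> indicator A \<in> bounded_measurable01"
  by (intro bounded_measurable01I[where B=1]) (auto simp: indicator_def)

lemma set_integrable_bounded_measurable01:
  assumes "f \<in> bounded_measurable01" "S \<in> sets lebesgue" "S \<subseteq> {0..1}"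
  shows "set_integrable lebesgue S f"
proof -
  obtain B where "f \<in> borel_measurable lebesgue" "\<And>x. x \<in> {0..1} \<Longrightarrow> \<bar>f x\<bar> \<le> B"
    using assms(1) by (metis bounded_measurable01E)
  then show ?thesis
    using assms(2,3) lmeasurable_subset_interval[OF assms(2,3)]
    by (intro set_integrable_bounded[where C=B]) (auto simp: fmeasurable_def)
qed

definition halfW_form :: "(real \<Rightarrow> real) \<Rightarrow> (real \<Rightarrow> real) \<Rightarrow> real" where
  "halfW_form f g = (LINT z:unit_square|lebesgue2. halfW (fst z) (snd z) * f (fst z) * g (snd z))"

lemma set_integrable_halfW_form:
  assumes "f \<in> bounded_measurable01" "g \<in> bounded_measurable01"
  shows "set_integrable lebesgue2 unit_square (\<lambda>z. halfW (fst z) (snd z) * f (fst z) * g (snd z))"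
proof -
  obtain B C where f: "f \<in> borel_measurable lebesgue" "\<And>x. x \<in> {0..1} \<Longrightarrow> \<bar>f x\<bar> \<le> B" "0 \<le> B"
    and g: "g \<in> borel_measurable lebesgue" "\<And>x. x \<in> {0..1} \<Longrightarrow> \<bar>g x\<bar> \<le> C"
    using assms by (metis bounded_measurable01E)
  note [measurable] = borel_measurable_halfW
    borel_measurable_lebesgue_fst[OF f(1)] borel_measurable_lebesgue_snd[OF g(1)]
  show ?thesis
  proof (rule set_integrable_bounded[where C="1 * B * C"])
    show "\<bar>halfW (fst z) (snd z) * f (fst z) * g (snd z)\<bar> \<le> 1 * B * C" if "z \<in> unit_square" for z
    proof -
      have "\<bar>halfW (fst z) (snd z)\<bar> * \<bar>f (fst z)\<bar> \<le> 1 * B"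
        by (rule mult_mono) (use that f(2)[of "fst z"] abs_halfW_le in \<open>auto simp: mem_Times_iff\<close>)
      then have "\<bar>halfW (fst z) (snd z)\<bar> * \<bar>f (fst z)\<bar> * \<bar>g (snd z)\<bar> \<le> 1 * B * C"
        by (rule mult_mono) (use that f(3) g(2)[of "snd z"] in \<open>auto simp: mem_Times_iff\<close>)
      then show ?thesis
        by (simp add: abs_mult)
    qed
  qed (use emeasure_unit_square_finite in auto)
qed

lemma halfW_form_linear_left:
  assumes "f \<in> bounded_measurable01" "f' \<in> bounded_measurable01" "g \<in> bounded_measurable01"
  shows "halfW_form (\<lambda>x. f x + c * f' x) g = halfW_form f g + c * halfW_form f' g"
proof -
  have "halfW_form (\<lambda>x. f x + c * f' x) g
      = (LINT z:unit_square|lebesgue2. halfW (fst z) (snd z) * f (fst z) * g (snd z)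
          + c * (halfW (fst z) (snd z) * f' (fst z) * g (snd z)))"
    unfolding halfW_form_def by (simp add: algebra_simps)
  also have "\<dots> = halfW_form f g + c * halfW_form f' g"
    using set_integrable_halfW_form[OF assms(1,3)] set_integrable_halfW_form[OF assms(2,3)]
    by (simp add: set_integral_add halfW_form_def)
  finally show ?thesis .
qed

lemma halfW_form_commute:
  assumes "f \<in> bounded_measurable01" "g \<in> bounded_measurable01"
  shows "halfW_form f g = halfW_form g f"
proof -
  define h where "h = (\<lambda>z::real \<times> real. indicator unit_square z * (halfW (fst z) (snd z) * f (fst z) * g (snd z)))"
  have "h \<in> borel_measurable lebesgue2"
    using set_integrable_halfW_form[OF assms] unfolding h_def set_integrable_def
    by (simp add: borel_measurable_integrable)
  then have "(\<integral>(x, y). h (y, x) \<partial>lebesgue2) = integral\<^sup>L lebesgue2 h"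
    by (rule lebesgue_pair.integral_product_swap)
  moreover have "(\<lambda>(x, y). h (y, x))
      = (\<lambda>z. indicator unit_square z * (halfW (fst z) (snd z) * g (fst z) * f (snd z)))"
    by (auto simp: h_def halfW_commute indicator_def mem_Times_iff fun_eq_iff)
  ultimately show ?thesis
    by (simp add: halfW_form_def set_lebesgue_integral_def h_def)
qed

lemma halfW_form_linear_right:
  assumes "f \<in> bounded_measurable01" "g \<in> bounded_measurable01" "g' \<in> bounded_measurable01"
  shows "halfW_form f (\<lambda>y. g y + c * g' y) = halfW_form f g + c * halfW_form f g'"
proof -
  have "halfW_form f (\<lambda>y. g y + c * g' y) = halfW_form (\<lambda>y. g y + c * g' y) f"
    using assms bounded_measurable01_linear[OF assms(2,3)] by (simp add: halfW_form_commute)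
  also have "\<dots> = halfW_form g f + c * halfW_form g' f"
    using assms by (simp add: halfW_form_linear_left)
  finally show ?thesis
    using assms by (simp add: halfW_form_commute)
qed

lemma halfW_form_iterated:
  assumes "f \<in> bounded_measurable01" "g \<in> bounded_measurable01"
  shows "halfW_form f g = (LINT x:{0..1}|lebesgue. f x * (LINT y:{0..1}|lebesgue. halfW x y * g y))"
proof -
  have "integrable lebesgue2
      (\<lambda>z. indicator unit_square z * (halfW (fst z) (snd z) * f (fst z) * g (snd z)))"
    using set_integrable_halfW_form[OF assms] by (simp add: set_integrable_def)
  then have "halfW_form f g = (\<integral>x. (\<integral>y. indicator unit_square (x, y) * (halfW x y * f x * g y) \<partial>lebesgue) \<partial>lebesgue)"
    unfolding halfW_form_def set_lebesgue_integral_def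
    by (simp add: lebesgue_pair.integral_fst'[symmetric])
  also have "\<dots> = (\<integral>x. indicator {0..1} x * (f x * (\<integral>y. indicator {0..1} y * (halfW x y * g y) \<partial>lebesgue)) \<partial>lebesgue)"
    by (intro Bochner_Integration.integral_cong)
      (auto simp: indicator_times mult_ac simp flip: Bochner_Integration.integral_mult_right_zero)
  finally show ?thesis
    by (simp add: set_lebesgue_integral_def)
qed

lemma halfW_form_eq_0:
  assumes "\<And>x. x \<notin> A \<Longrightarrow> f x = 0" "\<And>y. y \<notin> B \<Longrightarrow> g y = 0"
    and "\<And>x y. x \<in> A \<Longrightarrow> y \<in> B \<Longrightarrow> halfW x y = 0"
  shows "halfW_form f g = 0"
proof -
  have zero: "halfW x y * f x * g y = 0" for x y
    using assms by (cases "x \<in> A \<and> y \<in> B") auto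
  show ?thesis
    unfolding halfW_form_def zero by simp
qed

section \<open>Optimality conditions for a minimizer\<close>

definition cut_gradient :: "(real \<Rightarrow> real) \<Rightarrow> real \<Rightarrow> real" where
  "cut_gradient \<theta> x = (LINT y:{0..1}|lebesgue. halfW x y * (1 - 2 * \<theta> y))"

lemma cutJ_eq_halfW_form: "cutJ halfW \<theta> = 8 * halfW_form \<theta> (\<lambda>y. 1 - \<theta> y)"
  by (simp add: cutJ_def halfW_form_def)

lemma cutJ_perturb:
  assumes \<theta>: "\<theta> \<in> bounded_measurable01" and \<phi>: "\<phi> \<in> bounded_measurable01"
  shows "cutJ halfW (\<lambda>x. \<theta> x + s * \<phi> x)
    = cutJ halfW \<theta> + 8 * s * (LINT x:{0..1}|lebesgue. \<phi> x * cut_gradient \<theta> x) - 8 * s\<^sup>2 * halfW_form \<phi> \<phi>"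
proof -
  have one_minus: "(\<lambda>y. 1 - c * \<theta> y) \<in> bounded_measurable01" for c
    using one_minus_bounded_measurable01[OF \<theta>] .
  have perturbed: "(\<lambda>x. \<theta> x + s * \<phi> x) \<in> bounded_measurable01"
    using bounded_measurable01_linear[OF \<theta> \<phi>] .
  have "cutJ halfW (\<lambda>x. \<theta> x + s * \<phi> x)
      = 8 * halfW_form (\<lambda>x. \<theta> x + s * \<phi> x) (\<lambda>y. 1 - \<theta> y + (- s) * \<phi> y)"
    by (simp add: cutJ_eq_halfW_form algebra_simps)
  also have "halfW_form (\<lambda>x. \<theta> x + s * \<phi> x) (\<lambda>y. 1 - \<theta> y + (- s) * \<phi> y)
      = halfW_form (\<lambda>x. \<theta> x + s * \<phi> x) (\<lambda>y. 1 - \<theta> y) + (- s) * halfW_form (\<lambda>x. \<theta> x + s * \<phi> x) \<phi>"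
    using halfW_form_linear_right[OF perturbed one_minus[of 1] \<phi>] by (simp only: mult_1)
  also have "\<dots> = halfW_form \<theta> (\<lambda>y. 1 - \<theta> y) + s * (halfW_form \<phi> (\<lambda>y. 1 - \<theta> y) - halfW_form \<theta> \<phi>)
      - s\<^sup>2 * halfW_form \<phi> \<phi>"
    using halfW_form_linear_left[OF \<theta> \<phi> one_minus[of 1]] halfW_form_linear_left[OF \<theta> \<phi> \<phi>]
    by (simp add: algebra_simps power2_eq_square)
  also have "halfW_form \<phi> (\<lambda>y. 1 - \<theta> y) - halfW_form \<theta> \<phi> = halfW_form \<phi> (\<lambda>y. 1 - 2 * \<theta> y)"
    using halfW_form_linear_right[OF \<phi> one_minus[of 1] \<theta>, of "-1"] halfW_form_commute[OF \<theta> \<phi>]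
    by (simp add: algebra_simps)
  also have "\<dots> = (LINT x:{0..1}|lebesgue. \<phi> x * cut_gradient \<theta> x)"
    using halfW_form_iterated[OF \<phi> one_minus[of 2]] by (simp add: cut_gradient_def)
  finally show ?thesis
    by (simp add: cutJ_eq_halfW_form algebra_simps)
qed

lemma bisectH_perturb:
  assumes \<theta>: "\<theta> \<in> bisectH" and \<phi>: "\<phi> \<in> bounded_measurable01" "(LINT x:{0..1}|lebesgue. \<phi> x) = 0"
    and range: "\<And>x. x \<in> {0..1} \<Longrightarrow> 0 \<le> \<theta> x + s * \<phi> x \<and> \<theta> x + s * \<phi> x \<le> 1"
  shows "(\<lambda>x. \<theta> x + s * \<phi> x) \<in> bisectH"
proof -
  have \<theta>': "\<theta> \<in> bounded_measurable01"
    using \<theta> by (rule bisectH_bounded_measurable01)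
  have "(LINT x:{0..1}|lebesgue. \<theta> x + s * \<phi> x) = (LINT x:{0..1}|lebesgue. \<theta> x) + s * (LINT x:{0..1}|lebesgue. \<phi> x)"
    using set_integrable_bounded_measurable01[OF \<theta>'] set_integrable_bounded_measurable01[OF \<phi>(1)]
    by (simp add: set_integral_add)
  moreover have "(\<lambda>x. \<theta> x + s * \<phi> x) \<in> bounded_measurable01"
    using bounded_measurable01_linear[OF \<theta>' \<phi>(1)] .
  ultimately show ?thesis
    using \<theta> \<phi>(2) range by (auto simp: bisectH_def bounded_measurable01_def)
qed

text \<open>First- and second-order optimality for the two-sided perturbations \<open>\<theta> \<pm> s \<phi>\<close>.\<close>
lemma minimizer_variation:
  assumes \<theta>: "\<theta> \<in> bisectH" and min: "\<forall>\<psi>\<in>bisectH. cutJ halfW \<theta> \<le> cutJ halfW \<psi>"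
    and \<phi>: "\<phi> \<in> borel_measurable lebesgue" "(LINT x:{0..1}|lebesgue. \<phi> x) = 0"
    and s: "0 < s" and room: "\<And>x. x \<in> {0..1} \<Longrightarrow> s * \<bar>\<phi> x\<bar> \<le> min (\<theta> x) (1 - \<theta> x)"
  shows "s * halfW_form \<phi> \<phi> + \<bar>LINT x:{0..1}|lebesgue. \<phi> x * cut_gradient \<theta> x\<bar> \<le> 0"
proof -
  have \<theta>': "\<theta> \<in> bounded_measurable01"
    using \<theta> by (rule bisectH_bounded_measurable01)
  have \<theta>_range: "0 \<le> \<theta> x" "\<theta> x \<le> 1" if "x \<in> {0..1}" for x
    using \<theta> that by (auto simp: bisectH_def)
  have "\<bar>\<phi> x\<bar> \<le> 1 / s" if "x \<in> {0..1}" for x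
    using room[OF that] \<theta>_range[OF that] s by (simp add: field_simps)
  then have \<phi>': "\<phi> \<in> bounded_measurable01"
    using \<phi>(1) by (rule bounded_measurable01I[rotated])
  define lin where "lin = (LINT x:{0..1}|lebesgue. \<phi> x * cut_gradient \<theta> x)"
  have "0 \<le> t * lin - t\<^sup>2 * halfW_form \<phi> \<phi>" if "t = s \<or> t = - s" for t
  proof -
    have "\<bar>t * \<phi> x\<bar> \<le> min (\<theta> x) (1 - \<theta> x)" if "x \<in> {0..1}" for x
      using room[OF that] \<open>t = s \<or> t = - s\<close> s by (auto simp: abs_mult)
    then have "0 \<le> \<theta> x + t * \<phi> x \<and> \<theta> x + t * \<phi> x \<le> 1" if "x \<in> {0..1}" for x
      using that by (fastforce simp: abs_le_iff)
    then have "(\<lambda>x. \<theta> x + t * \<phi> x) \<in> bisectH"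
      by (rule bisectH_perturb[OF \<theta> \<phi>' \<phi>(2)])
    then have "cutJ halfW \<theta> \<le> cutJ halfW (\<lambda>x. \<theta> x + t * \<phi> x)"
      using min by blast
    then show ?thesis
      using cutJ_perturb[OF \<theta>' \<phi>', of t] by (simp add: lin_def)
  qed
  from this[of s] this[of "- s"] have "s * (s * halfW_form \<phi> \<phi> + \<bar>lin\<bar>) \<le> 0"
    by (auto simp: power2_eq_square algebra_simps abs_if)
  then show ?thesis
    using s by (simp add: lin_def mult_le_0_iff)
qed

lemma borel_measurable_cut_gradient:
  assumes "\<theta> \<in> borel_measurable lebesgue"
  shows "cut_gradient \<theta> \<in> borel_measurable lebesgue"
proof -
  note [measurable] = borel_measurable_halfW borel_measurable_lebesgue_snd[OF assms]
    borel_measurable_lebesgue_snd[OF borel_measurable_indicator[of "{0::real..1}" lebesgue]]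
  have "(\<lambda>x. \<integral>y. indicator {0..1} y * (halfW x y * (1 - 2 * \<theta> y)) \<partial>lebesgue) \<in> borel_measurable lebesgue"
    by (rule sigma_finite_measure.borel_measurable_lebesgue_integral[OF sigma_finite_lebesgue]) measurable
  then show ?thesis
    unfolding cut_gradient_def set_lebesgue_integral_def by simp
qed

lemma abs_cut_gradient_le:
  assumes "\<theta> \<in> bisectH"
  shows "\<bar>cut_gradient \<theta> x\<bar> \<le> 1"
proof -
  have \<theta>: "\<theta> \<in> borel_measurable lebesgue" "\<And>y. y \<in> {0..1} \<Longrightarrow> 0 \<le> \<theta> y \<and> \<theta> y \<le> 1"
    using assms by (auto simp: bisectH_def)
  have bound: "\<bar>halfW x y * (1 - 2 * \<theta> y)\<bar> \<le> 1" if "y \<in> {0..1}" for y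
    using \<theta>(2)[OF that] by (auto simp: halfW_def)
  have int: "set_integrable lebesgue {0..1} (\<lambda>y. halfW x y * (1 - 2 * \<theta> y))"
    using \<theta>(1) bound unfolding halfW_def by (intro set_integrable_bounded[where C=1]) auto
  have "- 1 * measure lebesgue {0::real..1} \<le> cut_gradient \<theta> x"
    unfolding cut_gradient_def using bound by (intro set_integral_ge_const[OF int]) (auto simp: abs_le_iff)
  moreover have "cut_gradient \<theta> x \<le> 1 * measure lebesgue {0::real..1}"
    unfolding cut_gradient_def using bound by (intro set_integral_le_const[OF int]) (auto simp: abs_le_iff)
  ultimately show ?thesis
    by simp
qed

lemma cut_gradient_left_diff:
  assumes \<theta>: "\<theta> \<in> bisectH" and xy: "x \<in> {0<..<1/2}" "y \<in> {0<..<1/2}" "x \<le> y"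
  shows "cut_gradient \<theta> x - cut_gradient \<theta> y = (LINT z:{x + 1/2..<y + 1/2}|lebesgue. 1 - 2 * \<theta> z)"
proof -
  have left: "cut_gradient \<theta> u = (LINT z:{u + 1/2..1}|lebesgue. 1 - 2 * \<theta> z)" if "u \<in> {0<..<1/2}" for u
    unfolding cut_gradient_def set_lebesgue_integral_def
    by (rule Bochner_Integration.integral_cong) (use that in \<open>auto simp: indicator_def halfW_def\<close>)
  have F: "(\<lambda>z. 1 - 2 * \<theta> z) \<in> bounded_measurable01"
    using one_minus_bounded_measurable01[OF bisectH_bounded_measurable01[OF \<theta>]] .
  have "(LINT z:{x + 1/2..<y + 1/2} \<union> {y + 1/2..1}|lebesgue. 1 - 2 * \<theta> z)
      = (LINT z:{x + 1/2..<y + 1/2}|lebesgue. 1 - 2 * \<theta> z) + (LINT z:{y + 1/2..1}|lebesgue. 1 - 2 * \<theta> z)"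
    using xy by (intro set_integral_Un set_integrable_bounded_measurable01[OF F]) auto
  moreover have "{x + 1/2..<y + 1/2} \<union> {y + 1/2..1} = {x + 1/2..1}"
    using xy by auto
  ultimately show ?thesis
    using left xy by simp
qed

lemma cut_gradient_right_diff:
  assumes \<theta>: "\<theta> \<in> bisectH" and xy: "x \<in> {1/2<..<1}" "y \<in> {1/2<..<1}" "x \<le> y"
  shows "cut_gradient \<theta> y - cut_gradient \<theta> x = (LINT z:{x - 1/2<..y - 1/2}|lebesgue. 1 - 2 * \<theta> z)"
proof -
  have right: "cut_gradient \<theta> u = (LINT z:{0..u - 1/2}|lebesgue. 1 - 2 * \<theta> z)" if "u \<in> {1/2<..<1}" for u
    unfolding cut_gradient_def set_lebesgue_integral_def
    by (rule Bochner_Integration.integral_cong) (use that in \<open>auto simp: indicator_def halfW_def\<close>)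
  have F: "(\<lambda>z. 1 - 2 * \<theta> z) \<in> bounded_measurable01"
    using one_minus_bounded_measurable01[OF bisectH_bounded_measurable01[OF \<theta>]] .
  have "(LINT z:{0..x - 1/2} \<union> {x - 1/2<..y - 1/2}|lebesgue. 1 - 2 * \<theta> z)
      = (LINT z:{0..x - 1/2}|lebesgue. 1 - 2 * \<theta> z) + (LINT z:{x - 1/2<..y - 1/2}|lebesgue. 1 - 2 * \<theta> z)"
    using xy by (intro set_integral_Un set_integrable_bounded_measurable01[OF F]) auto
  moreover have "{0..x - 1/2} \<union> {x - 1/2<..y - 1/2} = {0..y - 1/2}"
    using xy by auto
  ultimately show ?thesis
    using right xy by simp
qed

lemma set_integral_indicator_subset:
  assumes "A \<in> sets lebesgue" "A \<subseteq> S"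
  shows "(LINT x:S|lebesgue. indicator A x) = measure lebesgue (A::real set)"
proof -
  have "(\<lambda>x. indicator S x *\<^sub>R indicator A x) = (indicator A :: real \<Rightarrow> real)"
    using assms(2) by (auto simp: indicator_def fun_eq_iff)
  then show ?thesis
    by (simp add: set_lebesgue_integral_def)
qed

lemma set_integral_indicator_diff:
  fixes G :: "real \<Rightarrow> real"
  assumes A: "A \<in> lmeasurable" "A \<subseteq> S" and B: "B \<in> lmeasurable" "B \<subseteq> S"
    and G: "G \<in> borel_measurable lebesgue" "\<And>x. \<bar>G x\<bar> \<le> C"
  shows "(LINT x:S|lebesgue. (b * indicator A x - a * indicator B x) * G x)
    = b * (LINT x:A|lebesgue. G x) - a * (LINT x:B|lebesgue. G x)"
proof -
  have int: "integrable lebesgue (\<lambda>x. indicator T x * G x)" if "T \<in> lmeasurable" for T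
  proof -
    have "emeasure lebesgue T < \<infinity>"
      using that unfolding fmeasurable_def by blast
    from set_integrable_bounded[OF G(1) fmeasurableD[OF that] this G(2)] show ?thesis
      by (simp add: set_integrable_def)
  qed
  have "(LINT x:S|lebesgue. (b * indicator A x - a * indicator B x) * G x)
      = (\<integral>x. b * (indicator A x * G x) - a * (indicator B x * G x) \<partial>lebesgue)"
    unfolding set_lebesgue_integral_def
    by (rule Bochner_Integration.integral_cong) (use A B in \<open>auto simp: indicator_def left_diff_distrib\<close>)
  also have "\<dots> = b * (LINT x:A|lebesgue. G x) - a * (LINT x:B|lebesgue. G x)"
    using int[OF A(1)] int[OF B(1)] by (simp add: set_lebesgue_integral_def)
  finally show ?thesis .
qed

lemma minimizer_constant_averages:
  assumes \<theta>: "\<theta> \<in> bisectH" and min: "\<forall>\<psi>\<in>bisectH. cutJ halfW \<theta> \<le> cutJ halfW \<psi>"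
    and E: "E \<subseteq> {0..1}" "\<And>x y. x \<in> E \<Longrightarrow> y \<in> E \<Longrightarrow> \<bar>x - y\<bar> < 1/2"
    and interior: "0 < \<epsilon>" "\<And>x. x \<in> E \<Longrightarrow> \<epsilon> \<le> \<theta> x \<and> \<theta> x \<le> 1 - \<epsilon>"
  shows "constant_averages_on E (cut_gradient \<theta>)"
  unfolding constant_averages_on_def
proof (intro allI impI)
  fix A B assume AB: "A \<subseteq> E" "B \<subseteq> E" "A \<in> sets lebesgue" "B \<in> sets lebesgue"
  \<comment> \<open>\<open>\<phi>\<close> is supported in \<open>E\<close>, where \<open>halfW\<close> vanishes, so its quadratic term is zero\<close>
  define a where "a = measure lebesgue A"
  define b where "b = measure lebesgue B"
  define \<phi> where "\<phi> x = b * indicator A x - a * indicator B x" for x :: real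
  have lm: "A \<in> lmeasurable" "B \<in> lmeasurable"
    using AB E by (auto intro: lmeasurable_subset_interval)
  have ab: "0 \<le> a" "a \<le> 1" "0 \<le> b" "b \<le> 1"
    using lm AB E measure_mono_fmeasurable[of _ "{0..1::real}" lebesgue]
    by (auto simp: a_def b_def)
  have \<phi>_meas: "\<phi> \<in> borel_measurable lebesgue"
    using AB unfolding \<phi>_def by measurable
  have \<phi>_outside: "\<phi> x = 0" if "x \<notin> E" for x
    using that AB by (auto simp: \<phi>_def indicator_def)
  have "halfW x y = 0" if "x \<in> E" "y \<in> E" for x y
    using E(2)[OF that] unfolding halfW_def abs_less_iff by auto
  then have "halfW_form \<phi> \<phi> = 0"
    using \<phi>_outside by (intro halfW_form_eq_0[where A=E and B=E]) auto
  moreover have "(LINT x:{0..1}|lebesgue. \<phi> x) = 0"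
  proof -
    have "(LINT x:{0..1}|lebesgue. \<phi> x * 1) = b * (LINT x:A|lebesgue. 1) - a * (LINT x:B|lebesgue. 1)"
      unfolding \<phi>_def using AB E lm by (intro set_integral_indicator_diff[where C=1]) auto
    moreover have one: "(LINT x:S|lebesgue. 1) = measure lebesgue S" if "S \<in> lmeasurable" for S
      using set_integral_const[OF fmeasurableD[OF that], of "1::real"] fmeasurableD2[OF that] by simp
    ultimately show ?thesis
      using one[OF lm(1)] one[OF lm(2)] by (simp add: a_def b_def)
  qed
  moreover have "\<epsilon> * \<bar>\<phi> x\<bar> \<le> min (\<theta> x) (1 - \<theta> x)" if "x \<in> {0..1}" for x
  proof (cases "x \<in> E")
    case True
    have "\<bar>\<phi> x\<bar> \<le> 1"
      using ab by (auto simp: \<phi>_def indicator_def)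
    then show ?thesis
      using interior(1) interior(2)[OF True] by (smt (verit) mult_left_le)
  next
    case False
    then show ?thesis
      using \<theta> that by (auto simp: \<phi>_outside bisectH_def)
  qed
  ultimately have "(LINT x:{0..1}|lebesgue. \<phi> x * cut_gradient \<theta> x) = 0"
    using minimizer_variation[OF \<theta> min \<phi>_meas _ interior(1)] by fastforce
  moreover have "(LINT x:{0..1}|lebesgue. \<phi> x * cut_gradient \<theta> x)
      = b * (LINT x:A|lebesgue. cut_gradient \<theta> x) - a * (LINT x:B|lebesgue. cut_gradient \<theta> x)"
    unfolding \<phi>_def using AB E lm \<theta>
    by (intro set_integral_indicator_diff[where C=1])
      (auto simp: bisectH_def borel_measurable_cut_gradient abs_cut_gradient_le)
  ultimately show "measure lebesgue B * (LINT x:A|lebesgue. cut_gradient \<theta> x)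
      = measure lebesgue A * (LINT x:B|lebesgue. cut_gradient \<theta> x)"
    by (simp add: a_def b_def)
qed

section \<open>A direction of positive curvature\<close>

lemma measure_Int_atMost_split:
  fixes R :: "real set"
  assumes R: "R \<in> lmeasurable" and "s \<le> t"
  shows "measure lebesgue (R \<inter> {..t}) = measure lebesgue (R \<inter> {..s}) + measure lebesgue (R \<inter> {s<..t})"
proof -
  have "R \<inter> {..s} \<in> lmeasurable" "R \<inter> {s<..t} \<in> lmeasurable"
    using fmeasurableD[OF R] by (auto intro: fmeasurableI2[OF R])
  then have "measure lebesgue ((R \<inter> {..s}) \<union> (R \<inter> {s<..t}))
      = measure lebesgue (R \<inter> {..s}) + measure lebesgue (R \<inter> {s<..t})
        - measure lebesgue ((R \<inter> {..s}) \<inter> (R \<inter> {s<..t}))"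
    by (rule measure_Un3)
  moreover have "(R \<inter> {..s}) \<union> (R \<inter> {s<..t}) = R \<inter> {..t}" "(R \<inter> {..s}) \<inter> (R \<inter> {s<..t}) = {}"
    using \<open>s \<le> t\<close> by auto
  ultimately show ?thesis
    by simp
qed

lemma lipschitz_measure_Int_atMost:
  fixes R :: "real set"
  assumes R: "R \<in> lmeasurable"
  shows "1-lipschitz_on S (\<lambda>t. measure lebesgue (R \<inter> {..t}))"
proof (rule lipschitz_onI)
  have slope: "measure lebesgue (R \<inter> {s<..t}) \<le> t - s" if "s \<le> t" for s t
  proof -
    have "measure lebesgue (R \<inter> {s<..t}) \<le> measure lebesgue {s..t}"
      using fmeasurableD[OF R] by (intro measure_mono_fmeasurable) auto
    then show ?thesis
      using that by simp
  qed
  show "dist (measure lebesgue (R \<inter> {..s})) (measure lebesgue (R \<inter> {..t})) \<le> 1 * dist s t" for s t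
    using measure_Int_atMost_split[OF R, of s t] measure_Int_atMost_split[OF R, of t s] slope[of s t] slope[of t s]
    by (cases "s \<le> t") (auto simp: dist_real_def)
qed simp

lemma exists_quartiles:
  fixes R :: "real set"
  assumes R: "R \<in> sets lebesgue" "R \<subseteq> {a<..b}" "0 < measure lebesgue R"
  obtains t1 t2 t3 where "a \<le> t1" "t1 < t2" "t2 < t3" "t3 \<le> b"
    "measure lebesgue (R \<inter> {..t1}) = measure lebesgue R / 4"
    "measure lebesgue (R \<inter> {t1<..t2}) = measure lebesgue R / 4"
    "measure lebesgue (R \<inter> {t2<..t3}) = measure lebesgue R / 4"
    "measure lebesgue (R \<inter> {t3<..}) = measure lebesgue R / 4"
proof -
  define \<mu> where "\<mu> = measure lebesgue R"
  define f where "f t = measure lebesgue (R \<inter> {..t})" for t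
  have "R \<subseteq> {a..b}"
    using R(2) by auto
  then have R_lm: "R \<in> lmeasurable"
    using R(1) by (rule lmeasurable_subset_interval[rotated])
  have split: "f t = f s + measure lebesgue (R \<inter> {s<..t})" if "s \<le> t" for s t
    using measure_Int_atMost_split[OF R_lm that] by (simp add: f_def)
  have "continuous_on {a..b} f"
    unfolding f_def by (rule lipschitz_on_continuous_on[OF lipschitz_measure_Int_atMost[OF R_lm]])
  moreover have "R \<inter> {..a} = {}" "R \<inter> {..b} = R"
    using R(2) by auto
  then have "f a = 0" "f b = \<mu>"
    by (simp_all add: f_def \<mu>_def)
  moreover have "a \<le> b"
    using R(2,3) by (cases "R = {}") force+
  ultimately have ivt: "\<exists>t. a \<le> t \<and> t \<le> b \<and> f t = c" if "0 \<le> c" "c \<le> \<mu>" for c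
    using that IVT'[of f a c b] by auto
  have \<mu>: "0 < \<mu>" using R(3) by (simp add: \<mu>_def)
  obtain t1 t2 t3 where t: "a \<le> t1" "t1 \<le> b" "f t1 = \<mu>/4" "a \<le> t2" "t2 \<le> b" "f t2 = \<mu>/2"
      "a \<le> t3" "t3 \<le> b" "f t3 = 3*\<mu>/4"
    using ivt[of "\<mu>/4"] ivt[of "\<mu>/2"] ivt[of "3*\<mu>/4"] \<mu> by auto
  have mono: "f s \<le> f t" if "s \<le> t" for s t
    using split[OF that] by simp
  have "t1 < t2" "t2 < t3"
    using mono[of t2 t1] mono[of t3 t2] t \<mu> by (auto simp: not_less[symmetric])
  moreover have "R \<inter> {t3<..b} = R \<inter> {t3<..}"
    using R(2) by auto
  then have "measure lebesgue (R \<inter> {t3<..}) = \<mu> / 4"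
    using split[of t3 b] t \<open>f b = \<mu>\<close> by simp
  ultimately show thesis
    using that[of t1 t2 t3] t split[of t1 t2] split[of t2 t3] by (simp add: f_def \<mu>_def)
qed

lemma halfW_form_indicator:
  assumes A: "A \<in> lmeasurable" "A \<subseteq> {0..1}" and B: "B \<in> lmeasurable" "B \<subseteq> {0..1}"
    and w: "\<And>x y. x \<in> A \<Longrightarrow> y \<in> B \<Longrightarrow> halfW x y = w"
  shows "halfW_form (indicator A) (indicator B) = w * measure lebesgue A * measure lebesgue B"
proof -
  have "emeasure lebesgue2 (A \<times> B) = emeasure lebesgue A * emeasure lebesgue B"
    using A B by (intro sigma_finite_measure.emeasure_pair_measure_Times[OF sigma_finite_lebesgue]) auto
  then have "measure lebesgue2 (A \<times> B) = measure lebesgue A * measure lebesgue B"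
    by (simp add: measure_def enn2real_mult)
  moreover have "emeasure lebesgue A < \<infinity>" "emeasure lebesgue B < \<infinity>"
    using A(1) B(1) unfolding fmeasurable_def by blast+
  then have "emeasure lebesgue2 (A \<times> B) < \<infinity>"
    using \<open>emeasure lebesgue2 (A \<times> B) = _\<close> by (simp add: ennreal_mult_less_top)
  moreover have "halfW_form (indicator A) (indicator B) = (\<integral>z. w * indicator (A \<times> B) z \<partial>lebesgue2)"
    unfolding halfW_form_def set_lebesgue_integral_def
    by (rule Bochner_Integration.integral_cong) (use A B w in \<open>auto simp: indicator_def mem_Times_iff\<close>)
  ultimately show ?thesis
    using A B by (simp add: fmeasurableD)
qed

text \<open>Four sets \<open>A1 < A3\<close> in the left half and \<open>B2 < B4\<close> in the right half of the unit interval,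
  separated by the thresholds so that \<open>halfW\<close> is constant on each product of a left and a right set.\<close>
locale staircase_sets =
  fixes t1 t2 t3 :: real and A1 A3 B2 B4 :: "real set"
  assumes thresholds: "0 \<le> t1" "t1 \<le> t2" "t2 \<le> t3" "t3 \<le> 1/2"
    and lmeasurable: "A1 \<in> lmeasurable" "A3 \<in> lmeasurable" "B2 \<in> lmeasurable" "B4 \<in> lmeasurable"
    and subsets: "A1 \<subseteq> {0<..t1}" "A3 \<subseteq> {t2<..t3}" "B2 \<subseteq> {1/2 + t1<..1/2 + t2}" "B4 \<subseteq> {1/2 + t3<..<1}"
begin

definition left_step :: "real \<Rightarrow> real" where
  "left_step x = indicator A1 x - indicator A3 x"

definition right_step :: "real \<Rightarrow> real" where
  "right_step x = indicator B2 x - indicator B4 x"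

definition staircase :: "real \<Rightarrow> real" where
  "staircase x = left_step x + right_step x"

lemma mem_staircase_sets:
  "x \<in> A1 \<Longrightarrow> 0 < x \<and> x \<le> t1" "x \<in> A3 \<Longrightarrow> t2 < x \<and> x \<le> t3"
  "x \<in> B2 \<Longrightarrow> 1/2 + t1 < x \<and> x \<le> 1/2 + t2" "x \<in> B4 \<Longrightarrow> 1/2 + t3 < x \<and> x < 1"
  using subsets by auto

lemma indicator_staircase_sets_bounded_measurable01:
  "indicator A1 \<in> bounded_measurable01" "indicator A3 \<in> bounded_measurable01"
  "indicator B2 \<in> bounded_measurable01" "indicator B4 \<in> bounded_measurable01"
  using lmeasurable by (simp_all add: indicator_bounded_measurable01 fmeasurableD)

lemma left_step_linear: "left_step = (\<lambda>x. indicator A1 x + (- 1) * indicator A3 x)"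
  by (simp add: fun_eq_iff left_step_def)

lemma right_step_linear: "right_step = (\<lambda>x. indicator B2 x + (- 1) * indicator B4 x)"
  by (simp add: fun_eq_iff right_step_def)

lemma left_step_bounded_measurable01: "left_step \<in> bounded_measurable01"
  unfolding left_step_linear
  by (rule bounded_measurable01_linear[OF indicator_staircase_sets_bounded_measurable01(1,2)])

lemma right_step_bounded_measurable01: "right_step \<in> bounded_measurable01"
  unfolding right_step_linear
  by (rule bounded_measurable01_linear[OF indicator_staircase_sets_bounded_measurable01(3,4)])

lemmas step_bounded_measurable01 = left_step_bounded_measurable01 right_step_bounded_measurable01

lemma halfW_form_left_step: "halfW_form left_step left_step = 0"
proof (rule halfW_form_eq_0[where A="{0<..1/2}" and B="{0<..1/2}"])
  show "left_step x = 0" if "x \<notin> {0<..1/2}" for x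
    using that mem_staircase_sets(1,2)[of x] thresholds by (auto simp: left_step_def indicator_def)
  show "left_step y = 0" if "y \<notin> {0<..1/2}" for y
    using that mem_staircase_sets(1,2)[of y] thresholds by (auto simp: left_step_def indicator_def)
qed (auto simp: halfW_def)

lemma halfW_form_right_step: "halfW_form right_step right_step = 0"
proof (rule halfW_form_eq_0[where A="{1/2<..1}" and B="{1/2<..1}"])
  show "right_step x = 0" if "x \<notin> {1/2<..1}" for x
    using that mem_staircase_sets(3,4)[of x] thresholds by (auto simp: right_step_def indicator_def)
  show "right_step y = 0" if "y \<notin> {1/2<..1}" for y
    using that mem_staircase_sets(3,4)[of y] thresholds by (auto simp: right_step_def indicator_def)
qed (auto simp: halfW_def)

lemma halfW_form_left_right_step:
  "halfW_form left_step right_step = measure lebesgue A1 * measure lebesgue B2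
    - measure lebesgue A1 * measure lebesgue B4 + measure lebesgue A3 * measure lebesgue B4"
proof -
  note BM = indicator_staircase_sets_bounded_measurable01
  have form: "halfW_form (indicator A) (indicator B) = w * measure lebesgue A * measure lebesgue B"
    if "A \<in> lmeasurable" "B \<in> lmeasurable" "A \<subseteq> {0<..1/2}" "B \<subseteq> {1/2<..1}"
      "\<And>x y. x \<in> A \<Longrightarrow> y \<in> B \<Longrightarrow> halfW x y = w" for A B w
    using that by (intro halfW_form_indicator) auto
  have right: "halfW_form (indicator A) right_step
      = halfW_form (indicator A) (indicator B2) + (- 1) * halfW_form (indicator A) (indicator B4)"
    if "indicator A \<in> bounded_measurable01" for A
    unfolding right_step_linear by (rule halfW_form_linear_right[OF that BM(3,4)])
  have "halfW_form left_step right_step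
      = halfW_form (indicator A1) right_step + (- 1) * halfW_form (indicator A3) right_step"
    unfolding left_step_linear by (rule halfW_form_linear_left[OF BM(1,2) step_bounded_measurable01(2)])
  also have "\<dots> = halfW_form (indicator A1) (indicator B2) - halfW_form (indicator A1) (indicator B4)
      - halfW_form (indicator A3) (indicator B2) + halfW_form (indicator A3) (indicator B4)"
    using right[OF BM(1)] right[OF BM(2)] by simp
  also have "\<dots> = 1 * measure lebesgue A1 * measure lebesgue B2 - 1 * measure lebesgue A1 * measure lebesgue B4
      - 0 * measure lebesgue A3 * measure lebesgue B2 + 1 * measure lebesgue A3 * measure lebesgue B4"
  proof -
    have W: "x \<in> A1 \<Longrightarrow> y \<in> B2 \<Longrightarrow> halfW x y = 1" "x \<in> A1 \<Longrightarrow> y \<in> B4 \<Longrightarrow> halfW x y = 1"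
      "x \<in> A3 \<Longrightarrow> y \<in> B2 \<Longrightarrow> halfW x y = 0" "x \<in> A3 \<Longrightarrow> y \<in> B4 \<Longrightarrow> halfW x y = 1" for x y
      using mem_staircase_sets[of x] mem_staircase_sets[of y] thresholds by (auto simp: halfW_def)
    have sub: "A1 \<subseteq> {0<..1/2}" "A3 \<subseteq> {0<..1/2}" "B2 \<subseteq> {1/2<..1}" "B4 \<subseteq> {1/2<..1}"
      using mem_staircase_sets thresholds by force+
    show ?thesis
      using form[OF lmeasurable(1,3) sub(1,3) W(1)] form[OF lmeasurable(1,4) sub(1,4) W(2)]
        form[OF lmeasurable(2,3) sub(2,3) W(3)] form[OF lmeasurable(2,4) sub(2,4) W(4)] by simp
  qed
  finally show ?thesis
    by simp
qed

lemma halfW_form_staircase: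
  "halfW_form staircase staircase = 2 * (measure lebesgue A1 * measure lebesgue B2
    - measure lebesgue A1 * measure lebesgue B4 + measure lebesgue A3 * measure lebesgue B4)"
proof -
  note BM = step_bounded_measurable01
  have "staircase = (\<lambda>x. left_step x + 1 * right_step x)"
    by (simp add: fun_eq_iff staircase_def)
  then show ?thesis
    using halfW_form_linear_left[OF BM bounded_measurable01_linear[OF BM, of 1], of 1]
      halfW_form_linear_right[OF BM(1) BM, of 1] halfW_form_linear_right[OF BM(2) BM, of 1]
      halfW_form_commute[OF BM] halfW_form_left_step halfW_form_right_step halfW_form_left_right_step
    by simp
qed

lemma borel_measurable_staircase: "staircase \<in> borel_measurable lebesgue"
proof -
  note [measurable] = lmeasurable[THEN fmeasurableD]
  show ?thesis
    unfolding staircase_def[abs_def] left_step_def right_step_def by measurable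
qed

lemma set_integral_staircase:
  "(LINT x:{0..1}|lebesgue. staircase x)
    = measure lebesgue A1 - measure lebesgue A3 + measure lebesgue B2 - measure lebesgue B4"
proof -
  have ind: "set_integrable lebesgue {0..1} (indicator A :: real \<Rightarrow> real)"
    "(LINT x:{0..1}|lebesgue. indicator A x) = measure lebesgue A"
    if "A \<in> lmeasurable" "A \<subseteq> {0..1}" for A :: "real set"
    using that
    by (auto intro!: set_integrable_bounded_measurable01 indicator_bounded_measurable01
        set_integral_indicator_subset fmeasurableD)
  have "A1 \<subseteq> {0..1}" "A3 \<subseteq> {0..1}" "B2 \<subseteq> {0..1}" "B4 \<subseteq> {0..1}"
    using mem_staircase_sets thresholds by force+
  then show ?thesis
    using ind lmeasurable
    by (simp add: staircase_def left_step_def right_step_def set_integral_add set_integral_diff)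
qed

lemma abs_staircase_le: "\<bar>staircase x\<bar> \<le> 1"
proof -
  have "\<bar>left_step x\<bar> \<le> 1" "\<bar>right_step x\<bar> \<le> 1"
    using mem_staircase_sets[of x] thresholds by (auto simp: left_step_def right_step_def indicator_def)
  moreover have "left_step x = 0 \<or> right_step x = 0"
    using mem_staircase_sets[of x] thresholds by (auto simp: left_step_def right_step_def indicator_def)
  ultimately show ?thesis
    by (auto simp: staircase_def)
qed

lemma staircase_eq_0: "x \<notin> A1 \<union> A3 \<union> B2 \<union> B4 \<Longrightarrow> staircase x = 0"
  by (simp add: staircase_def left_step_def right_step_def)

end

lemma minimizer_no_fractional_pairs:
  assumes \<theta>: "\<theta> \<in> bisectH" and min: "\<forall>\<psi>\<in>bisectH. cutJ halfW \<theta> \<le> cutJ halfW \<psi>"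
    and R: "R \<in> sets lebesgue" "R \<subseteq> {0<..<1/2}" and \<epsilon>: "0 < \<epsilon>"
    and fractional: "\<And>u. u \<in> R \<Longrightarrow> \<epsilon> \<le> \<theta> u \<and> \<theta> u \<le> 1 - \<epsilon>"
      "\<And>u. u \<in> R \<Longrightarrow> \<epsilon> \<le> \<theta> (u + 1/2) \<and> \<theta> (u + 1/2) \<le> 1 - \<epsilon>"
  shows "R \<in> null_sets lebesgue"
proof -
  have R_lm: "R \<in> lmeasurable"
    using R by (intro lmeasurable_subset_interval[of _ 0 "1/2"]) auto
  have "measure lebesgue R = 0"
  proof (rule ccontr)
    assume "measure lebesgue R \<noteq> 0"
    then have "0 < measure lebesgue R"
      by (simp add: less_le)
    moreover have "R \<subseteq> {0<..1/2}"
      using R(2) by auto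
    ultimately obtain t1 t2 t3 where t: "0 \<le> t1" "t1 < t2" "t2 < t3" "t3 \<le> 1/2"
      and quarters: "measure lebesgue (R \<inter> {..t1}) = measure lebesgue R / 4"
        "measure lebesgue (R \<inter> {t1<..t2}) = measure lebesgue R / 4"
        "measure lebesgue (R \<inter> {t2<..t3}) = measure lebesgue R / 4"
        "measure lebesgue (R \<inter> {t3<..}) = measure lebesgue R / 4"
      using exists_quartiles[OF R(1)] by metis
    define m where "m = measure lebesgue R / 4"
    have "0 < m"
      using \<open>0 < measure lebesgue R\<close> by (simp add: m_def)
    have m: "measure lebesgue (R \<inter> {..t1}) = m" "measure lebesgue (R \<inter> {t1<..t2}) = m"
      "measure lebesgue (R \<inter> {t2<..t3}) = m" "measure lebesgue (R \<inter> {t3<..}) = m"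
      using quarters by (simp_all add: m_def)
    have R_part: "R \<inter> S \<in> lmeasurable" if "S \<in> sets lebesgue" for S
      using R(1) that by (intro fmeasurableI2[OF R_lm]) auto
    interpret staircase_sets t1 t2 t3 "R \<inter> {..t1}" "R \<inter> {t2<..t3}"
      "(+) (1/2) ` (R \<inter> {t1<..t2})" "(+) (1/2) ` (R \<inter> {t3<..})"
      using t R(2) R_part by unfold_locales (auto intro: measurable_translation)
    have "halfW_form staircase staircase = 2 * m\<^sup>2"
      by (simp add: halfW_form_staircase measure_translation m power2_eq_square)
    moreover have "(LINT x:{0..1}|lebesgue. staircase x) = 0"
      by (simp add: set_integral_staircase measure_translation m)
    moreover have "\<epsilon> * \<bar>staircase x\<bar> \<le> min (\<theta> x) (1 - \<theta> x)" if "x \<in> {0..1}" for x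
    proof (cases "x \<in> R \<or> x - 1/2 \<in> R")
      case True
      then have "\<epsilon> \<le> \<theta> x \<and> \<theta> x \<le> 1 - \<epsilon>"
        using fractional(1)[of x] fractional(2)[of "x - 1/2"] by auto
      then show ?thesis
        using \<epsilon> abs_staircase_le[of x] by (smt (verit) mult_left_le)
    next
      case False
      then have "staircase x = 0"
        by (intro staircase_eq_0) auto
      then show ?thesis
        using \<theta> that by (auto simp: bisectH_def)
    qed
    ultimately have "\<epsilon> * (2 * m\<^sup>2) \<le> 0"
      using minimizer_variation[OF \<theta> min borel_measurable_staircase _ \<epsilon>] by (smt (verit) abs_ge_zero)
    then show False
      using \<epsilon> \<open>0 < m\<close> by (simp add: mult_le_0_iff)
  qed
  then show ?thesis
    using null_sets_lebesgue_iff_measure_zero[OF R_lm] by simp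
qed

section \<open>Minimizers are integral\<close>

lemma minimizer_fractional_left_null:
  assumes \<theta>: "\<theta> \<in> bisectH" and min: "\<forall>\<psi>\<in>bisectH. cutJ halfW \<theta> \<le> cutJ halfW \<psi>" and \<epsilon>: "0 < \<epsilon>"
  shows "{x \<in> {0<..<1/2}. \<epsilon> \<le> \<theta> x \<and> \<theta> x \<le> 1 - \<epsilon>} \<in> null_sets lebesgue"
    (is "?E \<in> _")
proof -
  have \<theta>_meas: "\<theta> \<in> borel_measurable lebesgue" and \<theta>_range: "\<And>x. x \<in> {0..1} \<Longrightarrow> 0 \<le> \<theta> x \<and> \<theta> x \<le> 1"
    using \<theta> by (auto simp: bisectH_def)
  have [measurable]: "{0<..<1/2::real} \<in> sets lebesgue"
    by simp
  have E: "?E \<in> sets lebesgue"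
    using \<theta>_meas by measurable
  have AE_half: "AE u in lebesgue. u \<in> ?E \<longrightarrow> 1 - 2 * \<theta> (u + 1/2) = 0"
  proof (rule increment_ae_zero[where I="\<lambda>x y. {x + 1/2..<y + 1/2}" and C=1])
    show "constant_averages_on ?E (cut_gradient \<theta>)"
    proof (rule minimizer_constant_averages[OF \<theta> min _ _ \<epsilon>])
      show "\<bar>x - y\<bar> < 1/2" if "x \<in> ?E" "y \<in> ?E" for x y
      proof -
        have "0 < x" "x < 1/2" "0 < y" "y < 1/2"
          using that by auto
        then show ?thesis
          unfolding abs_less_iff by linarith
      qed
    qed auto
    show "cut_gradient \<theta> x - cut_gradient \<theta> y = (LINT z:{x + 1/2..<y + 1/2}|lebesgue. 1 - 2 * \<theta> z)"
      if "x \<in> ?E" "y \<in> ?E" "x \<le> y" for x y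
      using that by (intro cut_gradient_left_diff[OF \<theta>]) simp_all
    show "\<bar>1 - 2 * \<theta> z\<bar> \<le> 1" if "x \<in> ?E" "y \<in> ?E" "x \<le> y" "z \<in> {x + 1/2..<y + 1/2}" for x y z
      using that \<theta>_range[of z] by auto
    show "?E \<in> sets lebesgue"
      by (rule E)
    show "bounded ?E"
      by (rule bounded_subset[of "{0..1}"]) auto
    show "cut_gradient \<theta> \<in> borel_measurable lebesgue"
      by (rule borel_measurable_cut_gradient[OF \<theta>_meas])
    show "(\<lambda>z. 1 - 2 * \<theta> z) \<in> borel_measurable lebesgue"
      using \<theta>_meas by measurable
    show "\<bar>cut_gradient \<theta> x\<bar> \<le> 1" for x
      using \<theta> by (rule abs_cut_gradient_le)
    show "{x + 1/2<..<y + 1/2} \<subseteq> {x + 1/2..<y + 1/2} \<and> {x + 1/2..<y + 1/2} \<subseteq> {x + 1/2..y + 1/2}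
        \<and> {x + 1/2..<y + 1/2} \<in> sets lebesgue" for x y :: real
      by auto
  qed
  have null: "{u \<in> ?E. \<theta> (u + 1/2) = 1/2} \<in> null_sets lebesgue"
  proof (rule minimizer_no_fractional_pairs[OF \<theta> min, where \<epsilon>="min \<epsilon> (1/2)"])
    show "{u \<in> ?E. \<theta> (u + 1/2) = 1/2} \<in> sets lebesgue"
      using \<theta>_meas borel_measurable_lebesgue_shift[OF \<theta>_meas, of "1/2"] by measurable
    show "min \<epsilon> (1/2) \<le> \<theta> u \<and> \<theta> u \<le> 1 - min \<epsilon> (1/2)"
      "min \<epsilon> (1/2) \<le> \<theta> (u + 1/2) \<and> \<theta> (u + 1/2) \<le> 1 - min \<epsilon> (1/2)"
      if "u \<in> {u \<in> ?E. \<theta> (u + 1/2) = 1/2}" for u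
      using that by (auto simp: min_le_iff_disj)
  qed (use \<epsilon> in auto)
  have "AE u in lebesgue. u \<notin> ?E"
    using AE_half AE_not_in[OF null] by eventually_elim auto
  then show ?thesis
    using E by (simp add: AE_iff_null_sets)
qed

lemma minimizer_fractional_right_null:
  assumes \<theta>: "\<theta> \<in> bisectH" and min: "\<forall>\<psi>\<in>bisectH. cutJ halfW \<theta> \<le> cutJ halfW \<psi>" and \<epsilon>: "0 < \<epsilon>"
  shows "{x \<in> {1/2<..<1}. \<epsilon> \<le> \<theta> x \<and> \<theta> x \<le> 1 - \<epsilon>} \<in> null_sets lebesgue"
    (is "?E \<in> _")
proof -
  have \<theta>_meas: "\<theta> \<in> borel_measurable lebesgue" and \<theta>_range: "\<And>x. x \<in> {0..1} \<Longrightarrow> 0 \<le> \<theta> x \<and> \<theta> x \<le> 1"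
    using \<theta> by (auto simp: bisectH_def)
  have [measurable]: "{1/2<..<1::real} \<in> sets lebesgue" "{0<..<1/2::real} \<in> sets lebesgue"
    by simp_all
  have E: "?E \<in> sets lebesgue"
    using \<theta>_meas by measurable
  \<comment> \<open>on the right half \<open>cut_gradient \<theta>\<close> increases with \<open>x\<close>, so the increment lemma applies to its negative\<close>
  have AE_half: "AE u in lebesgue. u \<in> ?E \<longrightarrow> 1 - 2 * \<theta> (u + - (1/2)) = 0"
  proof (rule increment_ae_zero[where G="\<lambda>x. - 1 * cut_gradient \<theta> x" and I="\<lambda>x y. {x - 1/2<..y - 1/2}"
        and C=1])
    have "constant_averages_on ?E (cut_gradient \<theta>)"
    proof (rule minimizer_constant_averages[OF \<theta> min _ _ \<epsilon>])
      show "\<bar>x - y\<bar> < 1/2" if "x \<in> ?E" "y \<in> ?E" for x y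
      proof -
        have "1/2 < x" "x < 1" "1/2 < y" "y < 1"
          using that by auto
        then show ?thesis
          unfolding abs_less_iff by linarith
      qed
    qed auto
    then show "constant_averages_on ?E (\<lambda>x. - 1 * cut_gradient \<theta> x)"
      by (rule constant_averages_on_scale)
    show "- 1 * cut_gradient \<theta> x - - 1 * cut_gradient \<theta> y = (LINT z:{x - 1/2<..y - 1/2}|lebesgue. 1 - 2 * \<theta> z)"
      if "x \<in> ?E" "y \<in> ?E" "x \<le> y" for x y
      using cut_gradient_right_diff[OF \<theta>, of x y] that by simp
    show "\<bar>1 - 2 * \<theta> z\<bar> \<le> 1" if "x \<in> ?E" "y \<in> ?E" "x \<le> y" "z \<in> {x - 1/2<..y - 1/2}" for x y z
      using that \<theta>_range[of z] by auto
    show "?E \<in> sets lebesgue"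
      by (rule E)
    show "bounded ?E"
      by (rule bounded_subset[of "{0..1}"]) auto
    show "(\<lambda>x. - 1 * cut_gradient \<theta> x) \<in> borel_measurable lebesgue"
      using borel_measurable_cut_gradient[OF \<theta>_meas] by measurable
    show "(\<lambda>z. 1 - 2 * \<theta> z) \<in> borel_measurable lebesgue"
      using \<theta>_meas by measurable
    show "\<bar>- 1 * cut_gradient \<theta> x\<bar> \<le> 1" for x
      using abs_cut_gradient_le[OF \<theta>] by simp
    show "{x + - (1/2)<..<y + - (1/2)} \<subseteq> {x - 1/2<..y - 1/2} \<and> {x - 1/2<..y - 1/2} \<subseteq> {x + - (1/2)..y + - (1/2)}
        \<and> {x - 1/2<..y - 1/2} \<in> sets lebesgue" for x y :: real
      by auto
  qed
  define R where "R = {v \<in> {0<..<1/2}. v + 1/2 \<in> ?E \<and> \<theta> v = 1/2}"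
  have "R \<in> null_sets lebesgue"
  proof (rule minimizer_no_fractional_pairs[OF \<theta> min, where \<epsilon>="min \<epsilon> (1/2)"])
    show "R \<in> sets lebesgue"
      unfolding R_def using \<theta>_meas borel_measurable_lebesgue_shift[OF \<theta>_meas, of "1/2"] by measurable
    show "min \<epsilon> (1/2) \<le> \<theta> v \<and> \<theta> v \<le> 1 - min \<epsilon> (1/2)"
      "min \<epsilon> (1/2) \<le> \<theta> (v + 1/2) \<and> \<theta> (v + 1/2) \<le> 1 - min \<epsilon> (1/2)"
      if "v \<in> R" for v
      using that by (auto simp: R_def min_le_iff_disj)
  qed (use \<epsilon> in \<open>auto simp: R_def\<close>)
  then have "negligible ((+) (1/2) ` R)"
    by (intro negligible_translation) (simp add: negligible_iff_null_sets)
  then have null: "(+) (1/2) ` R \<in> null_sets lebesgue"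
    by (simp add: negligible_iff_null_sets)
  have in_image: "u \<in> (+) (1/2) ` R" if "u \<in> ?E" "1 - 2 * \<theta> (u + - (1/2)) = 0" for u
    by (rule image_eqI[of _ _ "u - 1/2"]) (use that in \<open>auto simp: R_def\<close>)
  have "AE u in lebesgue. u \<notin> ?E"
    using AE_half AE_not_in[OF null] by eventually_elim (use in_image in blast)
  then show ?thesis
    using E by (simp add: AE_iff_null_sets)
qed

lemma minimizer_fractional_null:
  assumes \<theta>: "\<theta> \<in> bisectH" and min: "\<forall>\<psi>\<in>bisectH. cutJ halfW \<theta> \<le> cutJ halfW \<psi>" and \<epsilon>: "0 < \<epsilon>"
  shows "{x \<in> {0..1}. \<epsilon> \<le> \<theta> x \<and> \<theta> x \<le> 1 - \<epsilon>} \<in> null_sets lebesgue"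
proof (rule null_sets_subset)
  have "negligible {0, 1/2, 1::real}"
    by (rule negligible_finite) simp
  then show "{0, 1/2, 1} \<union> {x \<in> {0<..<1/2}. \<epsilon> \<le> \<theta> x \<and> \<theta> x \<le> 1 - \<epsilon>}
      \<union> {x \<in> {1/2<..<1}. \<epsilon> \<le> \<theta> x \<and> \<theta> x \<le> 1 - \<epsilon>} \<in> null_sets lebesgue"
    using minimizer_fractional_left_null[OF assms] minimizer_fractional_right_null[OF assms]
    by (intro null_sets.Un) (simp_all add: negligible_iff_null_sets)
  have [measurable]: "{0..1::real} \<in> sets lebesgue" "\<theta> \<in> borel_measurable lebesgue"
    using \<theta> by (simp_all add: bisectH_def)
  show "{x \<in> {0..1}. \<epsilon> \<le> \<theta> x \<and> \<theta> x \<le> 1 - \<epsilon>} \<in> sets lebesgue"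
    by measurable
qed auto

theorem mainTheorem9:
  assumes "\<theta> \<in> bisectH"
      and "\<forall>\<phi>\<in>bisectH. cutJ halfW \<theta> \<le> cutJ halfW \<phi>"
  shows "AE x in lebesgue. x \<in> {0..1} \<longrightarrow> \<theta> x \<in> {0, 1}"
proof (rule AE_I')
  show "(\<Union>n. {x \<in> {0..1}. 1 / Suc n \<le> \<theta> x \<and> \<theta> x \<le> 1 - 1 / Suc n}) \<in> null_sets lebesgue"
    using assms by (intro null_sets_UN minimizer_fractional_null) auto
  show "{x \<in> space lebesgue. \<not> (x \<in> {0..1} \<longrightarrow> \<theta> x \<in> {0, 1})}
      \<subseteq> (\<Union>n. {x \<in> {0..1}. 1 / Suc n \<le> \<theta> x \<and> \<theta> x \<le> 1 - 1 / Suc n})"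
  proof
    fix x assume "x \<in> {x \<in> space lebesgue. \<not> (x \<in> {0..1} \<longrightarrow> \<theta> x \<in> {0, 1})}"
    then have x: "x \<in> {0..1}" "0 < \<theta> x" "\<theta> x < 1"
      using assms(1) by (auto simp: bisectH_def less_le)
    then obtain n where "1 / Suc n < min (\<theta> x) (1 - \<theta> x)"
      by (metis diff_gt_0_iff_gt min_less_iff_conj nat_approx_posE)
    then have "x \<in> {x \<in> {0..1}. 1 / Suc n \<le> \<theta> x \<and> \<theta> x \<le> 1 - 1 / Suc n}"
      using x by auto
    then show "x \<in> (\<Union>n. {x \<in> {0..1}. 1 / Suc n \<le> \<theta> x \<and> \<theta> x \<le> 1 - 1 / Suc n})"
      by blast
  qed
qed

end
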